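(* Fix $c>0$ and an integer $K\ge1$, and let $p_n=c/n$. For the SFAP exploration algorithm on $n$ vertices (described in the context), let $A_k(t)=|\mathcal{A}_k(t)|$ and $\alpha^n_k(t)=A_k(\lfloor nt\rfloor)/n$ for $t\in[0,1]$, $1\le k\le K$, and $\boldsymbol\alpha^n(t)=(\alpha^n_1(t),\dots,\alpha^n_K(t))$. For $\boldsymbol\alpha=(\alpha_1,\dots,\alpha_K)$ and $1\le k\le K$ define $$\delta_k(\boldsymbol\alpha)=e^{-c\alpha_k}\prod_{r=1}^{k-1}\big(1-e^{-c\alpha_r}\big).$$ Then the integral equations $\alpha_k(t)=\int_0^t\delta_k(\boldsymbol\alpha(s))\,ds$, $1\le k\le K$, $t\in[0,1]$, have a unique solution $\boldsymbol\alpha(t)$, and the process $\{\boldsymbol\alpha^n(t)\}_{0\le t\le1}$ converges in distribution (uniformly on $[0,1]$) to the deterministic process $\{\boldsymbol\alpha(t)\}_{0\le t\le1}$. Consequently, if $N_k(n)$ is the number of vertices using frequency $k$ in the final state of the SFAP model on $G(n,c/n)$, then for all $1\le k\le K$, $N_k(n)/n\to\alpha_k(1)$ in distribution as $n\to\infty$.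
   Context: Empty products equal one. $G(n,p_n)$ is the Erdős–Rényi random graph on $[n]$ with independent edge probability $p_n$. SFAP model: given $G(n,p_n)$, vertices are selected one at a time uniformly at random among those not yet selected; a selected vertex receives the smallest frequency in $\{1,\dots,K\}$ not used by any of its neighbours, and if all $K$ frequencies are used by neighbours it gets no frequency (frozen). $N_k(n)$ is the number of vertices with frequency $k$ after all $n$ vertices are selected. SFAP exploration algorithm: maintain $\mathcal{A}_k(t)$ ($1\le k\le K$: explored vertices with frequency $k$; $\mathcal{A}_0(t)$: explored frozen vertices) and unexplored set $\mathcal{U}(t)$, initially empty and $[n]$. At step $t+1$, select $v\in\mathcal{U}(t)$ uniformly, remove it from $\mathcal{U}$, join it to each explored vertex independently with probability $p_n$; let $\mathcal{F}_v$ be $\{1,\dots,K\}$ minus the set of $k\ge1$ such that $v$ is joined to some vertex of $\mathcal{A}_k(t)$; if $\mathcal{F}_v\neq\varnothing$, $v$ joins $\mathcal{A}_{\min\mathcal{F}_v}$, otherwise $v$ joins $\mathcal{A}_0$. Convergence in distribution of processes is understood as uniform convergence over compact sets. *)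

theory Defs
  imports "HOL-Probability.Probability" "HOL-Combinatorics.Multiset_Permutations"
begin

text \<open>States of the exploration: a partial labelling f of vertices
  (f u = Some k, k in 1..K: explored with frequency k; f u = Some 0: explored frozen;
   f u = None: unexplored) together with the unexplored set U.\<close>

type_synonym sfap_state = "(nat \<Rightarrow> nat option) \<times> nat set"

definition explore_step :: "nat \<Rightarrow> real \<Rightarrow> sfap_state \<Rightarrow> sfap_state pmf" where
  "explore_step K p s = (case s of (f, U) \<Rightarrow>
     bind_pmf (pmf_of_set U) (\<lambda>v.
     bind_pmf (Pi_pmf (dom f) False (\<lambda>_. bernoulli_pmf p)) (\<lambda>S.
       let F = {1..K} - {k. 1 \<le> k \<and> (\<exists>u\<in>dom f. S u \<and> f u = Some k)}
       in return_pmf (f(v \<mapsto> (if F = {} then 0 else Min F)), U - {v}))))"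

fun explore_traj :: "nat \<Rightarrow> real \<Rightarrow> nat \<Rightarrow> nat \<Rightarrow> sfap_state list pmf" where
  "explore_traj K p n 0 = return_pmf [(Map.empty, {1..n})]"
| "explore_traj K p n (Suc t) =
     bind_pmf (explore_traj K p n t) (\<lambda>tr. map_pmf (\<lambda>s. tr @ [s]) (explore_step K p (last tr)))"

definition A_count :: "sfap_state list \<Rightarrow> nat \<Rightarrow> nat \<Rightarrow> nat" where
  "A_count tr k t = card {u. fst (tr ! t) u = Some k}"

definition alpha_n :: "nat \<Rightarrow> sfap_state list \<Rightarrow> nat \<Rightarrow> real \<Rightarrow> real" where
  "alpha_n n tr k t = real (A_count tr k (nat \<lfloor>real n * t\<rfloor>)) / real n"

definition sfap_delta :: "real \<Rightarrow> (nat \<Rightarrow> real) \<Rightarrow> nat \<Rightarrow> real" where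
  "sfap_delta c \<alpha> k = exp (- c * \<alpha> k) * (\<Prod>r\<in>{1..<k}. 1 - exp (- c * \<alpha> r))"

definition solves_sfap_ie :: "real \<Rightarrow> nat \<Rightarrow> (real \<Rightarrow> nat \<Rightarrow> real) \<Rightarrow> bool" where
  "solves_sfap_ie c K \<alpha> \<longleftrightarrow>
     (\<forall>k\<in>{1..K}. \<forall>t\<in>{0..1}. ((\<lambda>s. sfap_delta c (\<alpha> s) k) has_integral \<alpha> t k) {0..t})"

definition erdos_renyi :: "nat \<Rightarrow> real \<Rightarrow> (nat \<Rightarrow> nat \<Rightarrow> bool) pmf" where
  "erdos_renyi n p = map_pmf (\<lambda>X v u. v \<noteq> u \<and> X (min u v, max u v))
     (Pi_pmf {(i, j). i \<in> {1..n} \<and> j \<in> {1..n} \<and> i < j} False (\<lambda>_. bernoulli_pmf p))"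

fun sfap_assign :: "nat \<Rightarrow> (nat \<Rightarrow> nat \<Rightarrow> bool) \<Rightarrow> (nat \<Rightarrow> nat option) \<Rightarrow> nat list \<Rightarrow> (nat \<Rightarrow> nat option)" where
  "sfap_assign K E g [] = g"
| "sfap_assign K E g (v # vs) =
     (let F = {1..K} - {k. \<exists>u. E v u \<and> g u = Some k}
      in sfap_assign K E (g(v \<mapsto> (if F = {} then 0 else Min F))) vs)"

definition sfap_model :: "nat \<Rightarrow> nat \<Rightarrow> real \<Rightarrow> (nat \<Rightarrow> nat option) pmf" where
  "sfap_model K n p = bind_pmf (erdos_renyi n p) (\<lambda>E.
     map_pmf (\<lambda>vs. sfap_assign K E Map.empty vs) (pmf_of_set (permutations_of_set {1..n})))"

definition N_count :: "(nat \<Rightarrow> nat option) \<Rightarrow> nat \<Rightarrow> nat" where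
  "N_count g k = card {v. g v = Some k}"

end

theory Submission
  imports Defs "HOL-Real_Asymp.Real_Asymp"
begin

(* The integral equations are solved explicitly: with Q_k = prod_{r<k} (1 - exp (-c alpha_r)) and
   I_k(t) = int_0^t Q_k, one has exp (c alpha_k) = 1 + c I_k, which determines alpha_k from
   alpha_1, ..., alpha_(k-1); running the same computation on an arbitrary solution gives uniqueness.

   Given the past, the vertex explored at step s receives frequency k with probability
   q_k = (1 - p)^(A_k) prod_{r<k} (1 - (1 - p)^(A_r)), so A_k(t) - sum_{s<t} q_k(s) is a martingale
   with increments bounded by 1, whose second moment is at most t.  For p = c/n, q_k differs from
   delta_k(A/n) by O(1/n), and alpha is Lipschitz, so comparing A_k(t) with n alpha_k(t/n) step by
   step and applying a discrete Gronwall inequality bounds the expected total deviation by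
   O(sqrt n).  Markov's inequality then gives convergence in probability at each fixed t, and the
   monotonicity of A_k together with the Lipschitz continuity of alpha turns this into uniform
   convergence on [0,1] via a finite grid.

   Finally, revealing the edges of G(n, p) at a vertex only when that vertex is selected shows that
   the final assignment of the SFAP model has the law of the final state of the exploration, so
   N_k(n)/n has the law of alpha^n_k(1). *)

section \<open>The limiting integral equations\<close>

text \<open>For the solution, \<open>exp (- c * \<alpha>\<^sub>r t) = 1 / (1 + c * \<integral>\<^sub>0\<^sup>t Q\<^sub>r)\<close>, where
  \<open>Q\<^sub>k = (\<Prod>r\<in>{1..<k}. 1 - exp (- c * \<alpha>\<^sub>r))\<close>; this turns the system into a recursion in \<open>k\<close>
  (level \<open>0\<close> only serves as the starting value).\<close>

primrec sfap_Q :: "real \<Rightarrow> nat \<Rightarrow> real \<Rightarrow> real" where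
  "sfap_Q c 0 t = 1"
| "sfap_Q c (Suc k) t =
     sfap_Q c k t * (if k = 0 then 1 else 1 - 1 / (1 + c * integral {0..t} (sfap_Q c k)))"

definition sfap_I :: "real \<Rightarrow> nat \<Rightarrow> real \<Rightarrow> real" where
  "sfap_I c k t = integral {0..t} (sfap_Q c k)"

definition sfap_alpha :: "real \<Rightarrow> real \<Rightarrow> nat \<Rightarrow> real" where
  "sfap_alpha c t k = ln (1 + c * sfap_I c k t) / c"

lemma sfap_Q_continuous_bounded:
  assumes c: "c > 0"
  shows "continuous_on {0..1} (sfap_Q c k) \<and> (\<forall>t\<in>{0..1}. 0 \<le> sfap_Q c k t \<and> sfap_Q c k t \<le> 1)"
proof (induction k)
  case 0
  then show ?case by simp
next
  case (Suc k)
  then have cont: "continuous_on {0..1} (sfap_Q c k)"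
    and bnd: "\<And>t. t \<in> {0..1} \<Longrightarrow> 0 \<le> sfap_Q c k t \<and> sfap_Q c k t \<le> 1"
    by auto
  have int: "sfap_Q c k integrable_on {0..1}"
    using cont integrable_continuous_real by blast
  have int_nonneg: "0 \<le> integral {0..t} (sfap_Q c k)" if "t \<in> {0..1}" for t
  proof -
    have "sfap_Q c k integrable_on {0..t}"
      using int by (rule integrable_on_subinterval) (use that in auto)
    then show ?thesis
      by (rule integral_nonneg) (use bnd that in auto)
  qed
  then have pos: "0 < 1 + c * integral {0..t} (sfap_Q c k)" if "t \<in> {0..1}" for t
    using that c by (simp add: add_pos_nonneg)
  have "continuous_on {0..1} (\<lambda>t. 1 - 1 / (1 + c * integral {0..t} (sfap_Q c k)))"
    by (intro continuous_intros indefinite_integral_continuous_1[OF int]) (use pos in force)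
  then have "continuous_on {0..1} (sfap_Q c (Suc k))"
    by (cases "k = 0") (auto intro!: continuous_intros cont)
  moreover have "0 \<le> 1 - 1 / (1 + c * integral {0..t} (sfap_Q c k))"
    "1 - 1 / (1 + c * integral {0..t} (sfap_Q c k)) \<le> 1" if "t \<in> {0..1}" for t
    using pos[OF that] int_nonneg[OF that] c by (auto simp: field_simps)
  ultimately show ?case
    using bnd by (auto intro!: mult_nonneg_nonneg mult_le_one)
qed

lemma sfap_I_bounds:
  assumes c: "c > 0" and t: "t \<in> {0..1}"
  shows "0 \<le> sfap_I c k t" and "sfap_I c k t \<le> t"
proof -
  have bnd: "\<And>s. s \<in> {0..t} \<Longrightarrow> 0 \<le> sfap_Q c k s \<and> sfap_Q c k s \<le> 1"
    using sfap_Q_continuous_bounded[OF c] t by auto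
  have int: "sfap_Q c k integrable_on {0..t}"
    using sfap_Q_continuous_bounded[OF c, of k] t
    by (intro integrable_continuous_real) (auto elim: continuous_on_subset)
  show "0 \<le> sfap_I c k t"
    unfolding sfap_I_def by (rule integral_nonneg[OF int]) (use bnd in auto)
  have "sfap_I c k t \<le> integral {0..t} (\<lambda>_. 1::real)"
    unfolding sfap_I_def by (rule integral_le[OF int]) (use bnd in auto)
  then show "sfap_I c k t \<le> t"
    using t by simp
qed

lemma sfap_I_has_derivative:
  assumes c: "c > 0" and t: "t \<in> {0..1}"
  shows "(sfap_I c k has_real_derivative sfap_Q c k t) (at t within {0..1})"
  using integral_has_vector_derivative[OF conjunct1[OF sfap_Q_continuous_bounded[OF c]] t]
  unfolding sfap_I_def by (simp add: has_real_derivative_iff_has_vector_derivative)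

lemma exp_sfap_alpha:
  assumes c: "c > 0" and t: "t \<in> {0..1}"
  shows "exp (- c * sfap_alpha c t k) = 1 / (1 + c * sfap_I c k t)"
proof -
  have "0 < 1 + c * sfap_I c k t"
    using sfap_I_bounds(1)[OF c t] c by (simp add: add_pos_nonneg)
  then show ?thesis
    using c by (simp add: sfap_alpha_def exp_minus inverse_eq_divide)
qed

lemma prod_sfap_alpha:
  assumes c: "c > 0" and t: "t \<in> {0..1}"
  shows "(\<Prod>r\<in>{1..<k}. 1 - exp (- c * sfap_alpha c t r)) = sfap_Q c k t"
proof (induction k)
  case 0
  then show ?case by simp
next
  case (Suc k)
  show ?case
  proof (cases "k = 0")
    case False
    then have "{1..<Suc k} = insert k {1..<k}" by auto
    then show ?thesis
      using Suc False exp_sfap_alpha[OF c t, of k] by (simp add: sfap_I_def mult.commute)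
  qed simp
qed

lemma sfap_delta_sfap_alpha:
  assumes c: "c > 0" and t: "t \<in> {0..1}"
  shows "sfap_delta c (sfap_alpha c t) k = sfap_Q c k t / (1 + c * sfap_I c k t)"
  unfolding sfap_delta_def using exp_sfap_alpha[OF c t] prod_sfap_alpha[OF c t] by simp

lemma sfap_delta_sfap_alpha_bounds:
  assumes c: "c > 0" and t: "t \<in> {0..1}"
  shows "0 \<le> sfap_delta c (sfap_alpha c t) k" and "sfap_delta c (sfap_alpha c t) k \<le> 1"
proof -
  have I: "1 \<le> 1 + c * sfap_I c k t"
    using sfap_I_bounds(1)[OF c t] c by simp
  have Q: "0 \<le> sfap_Q c k t" "sfap_Q c k t \<le> 1"
    using sfap_Q_continuous_bounded[OF c] t by auto
  show "0 \<le> sfap_delta c (sfap_alpha c t) k"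
    using I Q by (simp add: sfap_delta_sfap_alpha[OF c t])
  have "sfap_Q c k t / (1 + c * sfap_I c k t) \<le> sfap_Q c k t"
    using I Q by (simp add: divide_le_eq mult_le_cancel_left1 mult.commute)
  then show "sfap_delta c (sfap_alpha c t) k \<le> 1"
    using Q by (simp add: sfap_delta_sfap_alpha[OF c t])
qed

lemma sfap_alpha_has_derivative:
  assumes c: "c > 0" and t: "t \<in> {0..1}"
  shows "((\<lambda>s. sfap_alpha c s k) has_real_derivative sfap_delta c (sfap_alpha c t) k)
           (at t within {0..1})"
proof -
  have pos: "0 < 1 + c * sfap_I c k t"
    using sfap_I_bounds(1)[OF c t] c by (simp add: add_pos_nonneg)
  have "((\<lambda>s. ln (1 + c * sfap_I c k s) / c) has_real_derivative
          (c * sfap_Q c k t / (1 + c * sfap_I c k t)) / c) (at t within {0..1})"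
    using pos by (auto intro!: derivative_eq_intros sfap_I_has_derivative[OF c t])
  then show ?thesis
    using c unfolding sfap_alpha_def sfap_delta_sfap_alpha[OF c t] by simp
qed

lemma sfap_alpha_zero [simp]: "sfap_alpha c 0 k = 0"
  by (simp add: sfap_alpha_def sfap_I_def)

lemma sfap_alpha_bounds:
  assumes c: "c > 0" and t: "t \<in> {0..1}"
  shows "0 \<le> sfap_alpha c t k" and "sfap_alpha c t k \<le> t"
proof -
  have I: "0 \<le> sfap_I c k t" "sfap_I c k t \<le> t"
    using sfap_I_bounds[OF c t] by auto
  show "0 \<le> sfap_alpha c t k"
    unfolding sfap_alpha_def using I c by simp
  have "ln (1 + c * sfap_I c k t) \<le> c * sfap_I c k t"
    using I c by (intro ln_add_one_self_le_self) simp
  also have "\<dots> \<le> c * t"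
    using I c by simp
  finally show "sfap_alpha c t k \<le> t"
    unfolding sfap_alpha_def using c by (simp add: divide_le_eq mult.commute)
qed

lemma solves_sfap_ie_sfap_alpha:
  assumes c: "c > 0"
  shows "solves_sfap_ie c K (sfap_alpha c)"
  unfolding solves_sfap_ie_def
proof (intro ballI)
  fix k t assume t: "t \<in> {0..(1::real)}"
  have "((\<lambda>s. sfap_delta c (sfap_alpha c s) k) has_integral sfap_alpha c t k - sfap_alpha c 0 k) {0..t}"
  proof (rule fundamental_theorem_of_calculus)
    fix x assume "x \<in> {0..t}"
    then have "x \<in> {0..1}"
      using t by auto
    then show "((\<lambda>s. sfap_alpha c s k) has_vector_derivative sfap_delta c (sfap_alpha c x) k)
                 (at x within {0..t})"
      using sfap_alpha_has_derivative[OF c] has_vector_derivative_within_subset[of _ _ x "{0..1}" "{0..t}"] t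
      by (auto simp: has_real_derivative_iff_has_vector_derivative)
  qed (use t in simp)
  then show "((\<lambda>s. sfap_delta c (sfap_alpha c s) k) has_integral sfap_alpha c t k) {0..t}"
    by simp
qed

lemma has_integral_indefinite_continuous:
  fixes F g :: "real \<Rightarrow> real"
  assumes "\<And>s. s \<in> {a..b} \<Longrightarrow> (g has_integral F s) {a..s}"
  shows "continuous_on {a..b} F"
proof -
  have "continuous_on {a..b} (\<lambda>s. integral {a..s} g)"
    using assms[of b] by (cases "a \<le> b") (auto intro!: indefinite_integral_continuous_1)
  then show ?thesis
    by (rule continuous_on_cong[THEN iffD1, rotated 2]) (use assms in \<open>auto simp: has_integral_iff\<close>)
qed

lemma has_integral_indefinite_has_derivative:
  fixes F g :: "real \<Rightarrow> real"
  assumes int: "\<And>s. s \<in> {a..b} \<Longrightarrow> (g has_integral F s) {a..s}" and cont: "continuous_on {a..b} g"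
    and s: "s \<in> {a..b}"
  shows "(F has_real_derivative g s) (at s within {a..b})"
proof -
  have "((\<lambda>u. integral {a..u} g) has_real_derivative g s) (at s within {a..b})"
    using integral_has_vector_derivative[OF cont s] by (simp add: has_real_derivative_iff_has_vector_derivative)
  then show ?thesis
    by (rule has_field_derivative_transform_within[where d=1]) (use s int in \<open>auto simp: has_integral_iff\<close>)
qed

text \<open>Given the lower levels, \<open>\<beta>\<^sub>k' = exp (- c * \<beta>\<^sub>k) * Q\<^sub>k\<close>, so \<open>exp (c * \<beta>\<^sub>k) - c * sfap_I c k\<close> is constant.\<close>

lemma solves_sfap_ie_unique_level:
  assumes c: "c > 0" and sol: "solves_sfap_ie c K \<beta>" and k: "k \<in> {1..K}"
    and below: "\<And>r t. r \<in> {1..<k} \<Longrightarrow> t \<in> {0..1} \<Longrightarrow> \<beta> t r = sfap_alpha c t r"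
    and t: "t \<in> {0..1}"
  shows "\<beta> t k = sfap_alpha c t k"
proof -
  define g where "g s = exp (- c * \<beta> s k) * sfap_Q c k s" for s
  have has_int: "(g has_integral \<beta> s k) {0..s}" if s: "s \<in> {0..1}" for s
  proof -
    have "sfap_delta c (\<beta> u) k = g u" if "u \<in> {0..s}" for u
      using below s that prod_sfap_alpha[OF c, of u k]
      unfolding g_def sfap_delta_def by (auto intro!: prod.cong)
    moreover have "((\<lambda>u. sfap_delta c (\<beta> u) k) has_integral \<beta> s k) {0..s}"
      using sol k s unfolding solves_sfap_ie_def by auto
    ultimately show ?thesis
      by (rule has_integral_eq)
  qed
  have g_cont: "continuous_on {0..1} g"
    unfolding g_def using sfap_Q_continuous_bounded[OF c, of k] has_integral_indefinite_continuous[OF has_int]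
    by (intro continuous_intros) auto
  have beta_deriv: "((\<lambda>s. \<beta> s k) has_real_derivative g s) (at s within {0..1})" if "s \<in> {0..1}" for s
    by (rule has_integral_indefinite_has_derivative[OF has_int g_cont that])
  define w where "w s = exp (c * \<beta> s k) - c * sfap_I c k s" for s
  have "(w has_real_derivative exp (c * \<beta> s k) * (c * g s) - c * sfap_Q c k s) (at s within {0..1})"
    if "s \<in> {0..1}" for s
    unfolding w_def by (auto intro!: derivative_eq_intros beta_deriv sfap_I_has_derivative c that)
  moreover have "exp (c * \<beta> s k) * (c * g s) - c * sfap_Q c k s = 0" for s
    unfolding g_def by (simp add: exp_minus field_simps)
  ultimately have w_deriv: "(w has_derivative (\<lambda>h. 0)) (at s within {0..1})" if "s \<in> {0..1}" for s
    using that by (auto simp: has_field_derivative_def lambda_zero)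
  have "w t = w 0"
    by (rule has_derivative_zero_unique[OF convex_real_interval(5) w_deriv]) (use t in auto)
  moreover have "\<beta> 0 k = 0"
    using has_int[of 0] by (simp add: has_integral_iff)
  ultimately have "exp (c * \<beta> t k) = 1 + c * sfap_I c k t"
    unfolding w_def by (simp add: sfap_I_def)
  then have "c * \<beta> t k = ln (1 + c * sfap_I c k t)"
    by (metis ln_exp)
  then show ?thesis
    unfolding sfap_alpha_def using c by (simp add: field_simps)
qed

lemma solves_sfap_ie_unique:
  assumes c: "c > 0" and sol: "solves_sfap_ie c K \<beta>" and t: "t \<in> {0..1}" and k: "k \<in> {1..K}"
  shows "\<beta> t k = sfap_alpha c t k"
  using k t
proof (induction k arbitrary: t rule: less_induct)
  case (less k)
  show ?case
  proof (rule solves_sfap_ie_unique_level[OF c sol less.prems(1) _ less.prems(2)])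
    fix r and s :: real assume "r \<in> {1..<k}" "s \<in> {0..1}"
    then show "\<beta> s r = sfap_alpha c s r"
      using less.prems(1) by (intro less.IH) auto
  qed
qed

lemma sfap_alpha_mvt:
  assumes c: "c > 0" and s: "s \<in> {0..1}" and t: "t \<in> {0..1}" and st: "s < t"
  obtains x where "x \<in> {s..t}" and "sfap_alpha c t k - sfap_alpha c s k = sfap_delta c (sfap_alpha c x) k * (t - s)"
proof -
  have deriv: "((\<lambda>u. sfap_alpha c u k) has_real_derivative sfap_delta c (sfap_alpha c x) k) (at x)"
    if "s < x" "x < t" for x
  proof -
    have "at x within {0..1} = at x"
      using that s t by (intro at_within_interior) auto
    then show ?thesis
      using sfap_alpha_has_derivative[OF c, of x k] that s t by simp
  qed
  have cont: "continuous_on {s..t} (\<lambda>u. sfap_alpha c u k)"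
    using sfap_alpha_has_derivative[OF c] s t
    by (intro DERIV_continuous_on[where D="\<lambda>x. sfap_delta c (sfap_alpha c x) k"]) (auto intro: DERIV_subset[where s="{0..1}"])
  obtain l z where z: "s < z" "z < t" "((\<lambda>u. sfap_alpha c u k) has_real_derivative l) (at z)"
    and eq: "sfap_alpha c t k - sfap_alpha c s k = (t - s) * l"
    using MVT[OF st cont] deriv real_differentiable_def by blast
  have "l = sfap_delta c (sfap_alpha c z) k"
    using DERIV_unique[OF z(3) deriv[OF z(1,2)]] .
  with z eq show ?thesis
    by (intro that[of z]) (simp_all add: mult.commute)
qed

lemma sfap_alpha_increment_bounds:
  assumes c: "c > 0" and s: "s \<in> {0..1}" and t: "t \<in> {0..1}" and st: "s \<le> t"
  shows "0 \<le> sfap_alpha c t k - sfap_alpha c s k" and "sfap_alpha c t k - sfap_alpha c s k \<le> t - s"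
proof -
  have "0 \<le> sfap_alpha c t k - sfap_alpha c s k \<and> sfap_alpha c t k - sfap_alpha c s k \<le> t - s"
  proof (cases "s < t")
    case True
    then obtain x where x: "x \<in> {s..t}"
      and eq: "sfap_alpha c t k - sfap_alpha c s k = sfap_delta c (sfap_alpha c x) k * (t - s)"
      using sfap_alpha_mvt[OF c s t] by blast
    have "x \<in> {0..1}"
      using x s t by auto
    then show ?thesis
      unfolding eq using sfap_delta_sfap_alpha_bounds[OF c, of x k] True
      by (auto intro: mult_left_le_one_le)
  qed (use st in simp)
  then show "0 \<le> sfap_alpha c t k - sfap_alpha c s k" and "sfap_alpha c t k - sfap_alpha c s k \<le> t - s"
    by auto
qed

section \<open>Random subsets hitting and missing classes\<close>

abbreviation bernoulli_field :: "'a set \<Rightarrow> real \<Rightarrow> ('a \<Rightarrow> bool) pmf" where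
  "bernoulli_field D p \<equiv> Pi_pmf D False (\<lambda>_. bernoulli_pmf p)"

lemma measure_pmf_prob_bind:
  "measure_pmf.prob (bind_pmf M N) X = (\<integral>x. measure_pmf.prob (N x) X \<partial>M)"
proof -
  have "ennreal (measure_pmf.prob (bind_pmf M N) X) = emeasure (bind_pmf M N) X"
    by (simp add: measure_pmf.emeasure_eq_measure)
  also have "\<dots> = (\<integral>\<^sup>+x. emeasure (N x) X \<partial>M)"
    by simp
  also have "\<dots> = (\<integral>\<^sup>+x. ennreal (measure_pmf.prob (N x) X) \<partial>M)"
    by (simp add: measure_pmf.emeasure_eq_measure)
  also have "\<dots> = ennreal (\<integral>x. measure_pmf.prob (N x) X \<partial>M)"
    by (rule nn_integral_eq_integral) (auto intro!: measure_pmf.integrable_const_bound[where B=1])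
  finally show ?thesis
    by (subst (asm) ennreal_inj) (auto intro: integral_nonneg)
qed

lemma expectation_bind_pmf_finite:
  fixes g :: "'b \<Rightarrow> real"
  assumes "finite (set_pmf M)" and "\<And>x. x \<in> set_pmf M \<Longrightarrow> finite (set_pmf (N x))"
  shows "measure_pmf.expectation (bind_pmf M N) g =
         measure_pmf.expectation M (\<lambda>x. measure_pmf.expectation (N x) g)"
proof -
  have "measure_pmf.expectation (bind_pmf M N) g =
        (\<Sum>a\<in>set_pmf M. pmf M a *\<^sub>R measure_pmf.expectation (N a) g)"
    using assms by (intro pmf_expectation_bind) auto
  also have "\<dots> = measure_pmf.expectation M (\<lambda>x. measure_pmf.expectation (N x) g)"
    using assms by (subst integral_measure_pmf[of "set_pmf M"]) auto
  finally show ?thesis .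
qed

lemma finite_set_pmf_bernoulli_field: "finite D \<Longrightarrow> finite (set_pmf (bernoulli_field D p))"
  by (subst set_Pi_pmf) (auto intro!: finite_PiE_dflt)

lemma prob_bernoulli_field_insert:
  assumes "finite D" and "x \<notin> D" and "0 \<le> p" and "p \<le> 1"
  shows "measure_pmf.prob (bernoulli_field (insert x D) p) E =
           p * measure_pmf.prob (bernoulli_field D p) {S. S(x := True) \<in> E}
         + (1 - p) * measure_pmf.prob (bernoulli_field D p) {S. S(x := False) \<in> E}"
proof -
  have "bernoulli_field (insert x D) p =
          bind_pmf (bernoulli_pmf p) (\<lambda>y. map_pmf (\<lambda>S. S(x := y)) (bernoulli_field D p))"
    using assms by (simp add: Pi_pmf_insert' map_pmf_def)
  then show ?thesis
    using assms by (simp add: measure_pmf_prob_bind measure_map_pmf vimage_def)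
qed

definition hit_miss_event :: "'a set \<Rightarrow> ('a \<Rightarrow> 'b) \<Rightarrow> 'b set \<Rightarrow> 'b set \<Rightarrow> ('a \<Rightarrow> bool) set" where
  "hit_miss_event D f J1 J0 =
     {S. (\<forall>j\<in>J1. \<exists>u\<in>D. f u = j \<and> S u) \<and> (\<forall>j\<in>J0. \<forall>u\<in>D. f u = j \<longrightarrow> \<not> S u)}"

lemma hit_miss_event_upd:
  assumes "x \<notin> D" and "J1 \<inter> J0 = {}"
  shows "{S. S(x := False) \<in> hit_miss_event (insert x D) f J1 J0} = hit_miss_event D f J1 J0"
    and "{S. S(x := True) \<in> hit_miss_event (insert x D) f J1 J0} =
           (if f x \<in> J0 then {} else hit_miss_event D f (J1 - {f x}) J0)"
  using assms by (auto simp: hit_miss_event_def split: if_splits)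

lemma hit_miss_formula_insert:
  fixes N :: "'b \<Rightarrow> nat" and b :: 'b and q :: real
  assumes J: "finite J1" "finite J0" "J1 \<inter> J0 = {}"
  defines "N' \<equiv> N(b := Suc (N b))"
  shows "(1 - q) * (if b \<in> J0 then 0 else (\<Prod>j\<in>J1 - {b}. 1 - q ^ N j) * (\<Prod>j\<in>J0. q ^ N j))
           + q * ((\<Prod>j\<in>J1. 1 - q ^ N j) * (\<Prod>j\<in>J0. q ^ N j))
         = (\<Prod>j\<in>J1. 1 - q ^ N' j) * (\<Prod>j\<in>J0. q ^ N' j)"
proof -
  have same: "(\<Prod>j\<in>J. g (N' j)) = (\<Prod>j\<in>J. g (N j))" if "b \<notin> J" for J and g :: "nat \<Rightarrow> real"
    using that unfolding N'_def by (intro prod.cong) auto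
  consider "b \<in> J1" | "b \<in> J0" | "b \<notin> J1" "b \<notin> J0"
    by blast
  then show ?thesis
  proof cases
    case 1
    then have "b \<notin> J0"
      using J(3) by auto
    then show ?thesis
      using 1 J(1) same[of J0 "\<lambda>n. q ^ n"] same[of "J1 - {b}" "\<lambda>n. 1 - q ^ n"]
      by (simp add: prod.remove[of J1 b] N'_def algebra_simps)
  next
    case 2
    then have "b \<notin> J1"
      using J(3) by auto
    then show ?thesis
      using 2 J(2) same[of J1 "\<lambda>n. 1 - q ^ n"] same[of "J0 - {b}" "\<lambda>n. q ^ n"]
      by (simp add: prod.remove[of J0 b] N'_def algebra_simps)
  next
    case 3
    then show ?thesis
      using same[of J1 "\<lambda>n. 1 - q ^ n"] same[of J0 "\<lambda>n. q ^ n"] by (simp add: algebra_simps)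
  qed
qed

lemma prob_hit_miss_event:
  assumes D: "finite D" and J: "finite J1" "finite J0" "J1 \<inter> J0 = {}" and p: "0 \<le> p" "p \<le> 1"
  shows "measure_pmf.prob (bernoulli_field D p) (hit_miss_event D f J1 J0) =
           (\<Prod>j\<in>J1. 1 - (1 - p) ^ card {u\<in>D. f u = j}) * (\<Prod>j\<in>J0. (1 - p) ^ card {u\<in>D. f u = j})"
  using D J(1,3)
proof (induction D arbitrary: J1 rule: finite_induct)
  case empty
  show ?case
  proof (cases "J1 = {}")
    case False
    then have "hit_miss_event {} f J1 J0 = {}"
      by (auto simp: hit_miss_event_def)
    moreover have "(\<Prod>j\<in>J1. 1 - (1 - p) ^ card {u\<in>{}. f u = j}) = 0"
      using False empty.prems by (intro prod_zero) auto
    ultimately show ?thesis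
      by simp
  qed (simp add: hit_miss_event_def)
next
  case (insert x D)
  define N where "N D' j = card {u\<in>D'. f u = j}" for D' j
  have "N (insert x D) j = ((N D)(f x := Suc (N D (f x)))) j" for j
  proof (cases "f x = j")
    case True
    then have "{u\<in>insert x D. f u = j} = insert x {u\<in>D. f u = j}"
      by auto
    with True insert.hyps show ?thesis
      by (simp add: N_def)
  next
    case False
    then have "{u\<in>insert x D. f u = j} = {u\<in>D. f u = j}"
      by auto
    with False show ?thesis
      by (simp add: N_def)
  qed
  then have N_insert: "N (insert x D) = (N D)(f x := Suc (N D (f x)))"
    by blast
  have IH: "measure_pmf.prob (bernoulli_field D p) (hit_miss_event D f J1' J0) =
      (\<Prod>j\<in>J1'. 1 - (1 - p) ^ N D j) * (\<Prod>j\<in>J0. (1 - p) ^ N D j)" if "J1' \<subseteq> J1" for J1'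
    unfolding N_def using that insert.prems finite_subset by (intro insert.IH) auto
  have "measure_pmf.prob (bernoulli_field (insert x D) p) (hit_miss_event (insert x D) f J1 J0) =
        p * (if f x \<in> J0 then 0 else measure_pmf.prob (bernoulli_field D p) (hit_miss_event D f (J1 - {f x}) J0))
        + (1 - p) * measure_pmf.prob (bernoulli_field D p) (hit_miss_event D f J1 J0)"
    using prob_bernoulli_field_insert[OF insert.hyps p] hit_miss_event_upd[OF insert.hyps(2) insert.prems(2)]
    by simp
  also have "\<dots> = (\<Prod>j\<in>J1. 1 - (1 - p) ^ N (insert x D) j) * (\<Prod>j\<in>J0. (1 - p) ^ N (insert x D) j)"
    unfolding N_insert IH[OF Diff_subset] IH[OF order_refl]
      hit_miss_formula_insert[OF insert.prems(1) J(2) insert.prems(2), where q="1 - p" and N="N D" and b="f x", symmetric]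
    by simp
  finally show ?case
    unfolding N_def .
qed

definition freq_count :: "(nat \<Rightarrow> nat option) \<Rightarrow> nat \<Rightarrow> nat" where
  "freq_count f k = card {u. f u = Some k}"

text \<open>The probability that the next explored vertex receives frequency \<open>k\<close>: it has no neighbour
  with frequency \<open>k\<close>, but one with each frequency \<open>r < k\<close>.\<close>

definition next_freq_prob :: "real \<Rightarrow> (nat \<Rightarrow> nat option) \<Rightarrow> nat \<Rightarrow> real" where
  "next_freq_prob p f k = (1 - p) ^ freq_count f k * (\<Prod>r\<in>{1..<k}. 1 - (1 - p) ^ freq_count f r)"

definition greedy_freq :: "nat \<Rightarrow> (nat \<Rightarrow> nat option) \<Rightarrow> (nat \<Rightarrow> bool) \<Rightarrow> nat" where
  "greedy_freq K f S =
     (let F = {1..K} - {k. 1 \<le> k \<and> (\<exists>u\<in>dom f. S u \<and> f u = Some k)} in if F = {} then 0 else Min F)"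

definition sfap_invariant :: "nat \<Rightarrow> nat \<Rightarrow> sfap_state \<Rightarrow> bool" where
  "sfap_invariant n K s \<longleftrightarrow> finite (snd s) \<and> snd s \<subseteq> {1..n} \<and> dom (fst s) = {1..n} - snd s \<and>
     (\<forall>u k. fst s u = Some k \<longrightarrow> k \<le> K)"

lemma explore_step_eq:
  "explore_step K p (f, U) =
     bind_pmf (pmf_of_set U) (\<lambda>v. map_pmf (\<lambda>S. (f(v \<mapsto> greedy_freq K f S), U - {v})) (bernoulli_field (dom f) p))"
  unfolding explore_step_def greedy_freq_def map_pmf_def by (simp add: Let_def)

lemma greedy_freq_le: "greedy_freq K f S \<le> K"
proof -
  let ?F = "{1..K} - {k. 1 \<le> k \<and> (\<exists>u\<in>dom f. S u \<and> f u = Some k)}"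
  have "?F \<noteq> {} \<Longrightarrow> Min ?F \<in> ?F"
    by (intro Min_in) auto
  then show ?thesis
    unfolding greedy_freq_def Let_def by auto
qed

lemma greedy_freq_eq_iff:
  assumes k: "k \<in> {1..K}"
  shows "greedy_freq K f S = k \<longleftrightarrow> S \<in> hit_miss_event (dom f) f (Some ` {1..<k}) {Some k}"
proof -
  define F where "F = {1..K} - {k. 1 \<le> k \<and> (\<exists>u\<in>dom f. S u \<and> f u = Some k)}"
  have finF: "finite F"
    unfolding F_def by auto
  have "greedy_freq K f S = k \<longleftrightarrow> k \<in> F \<and> (\<forall>r\<in>{1..<k}. r \<notin> F)"
  proof
    assume eq: "greedy_freq K f S = k"
    then have "F \<noteq> {}"
      using k unfolding greedy_freq_def Let_def F_def[symmetric] by (auto split: if_splits)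
    moreover from this have "Min F = k"
      using eq unfolding greedy_freq_def Let_def F_def[symmetric] by simp
    ultimately show "k \<in> F \<and> (\<forall>r\<in>{1..<k}. r \<notin> F)"
      using Min_in[OF finF] Min_le[OF finF] by fastforce
  next
    assume *: "k \<in> F \<and> (\<forall>r\<in>{1..<k}. r \<notin> F)"
    have "Min F = k"
    proof (rule Min_eqI[OF finF])
      fix y assume y: "y \<in> F"
      then have "1 \<le> y"
        unfolding F_def by auto
      with * y show "k \<le> y"
        by (meson atLeastLessThan_iff not_le)
    qed (use * in simp)
    with * show "greedy_freq K f S = k"
      unfolding greedy_freq_def Let_def F_def[symmetric] by auto
  qed
  also have "\<dots> \<longleftrightarrow> S \<in> hit_miss_event (dom f) f (Some ` {1..<k}) {Some k}"
    using k unfolding F_def hit_miss_event_def by (auto simp: dom_def) (metis atLeastLessThan_iff)+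
  finally show ?thesis .
qed

lemma card_dom_freq: "card {u\<in>dom f. f u = Some k} = freq_count f k"
  unfolding freq_count_def by (rule arg_cong[where f=card]) auto

lemma prob_greedy_freq:
  assumes k: "k \<in> {1..K}" and fin: "finite (dom f)" and p: "0 \<le> p" "p \<le> 1"
  shows "measure_pmf.prob (bernoulli_field (dom f) p) {S. greedy_freq K f S = k} = next_freq_prob p f k"
proof -
  have "{S. greedy_freq K f S = k} = hit_miss_event (dom f) f (Some ` {1..<k}) {Some k}"
    using greedy_freq_eq_iff[OF k] by auto
  moreover have "Some k \<notin> Some ` {1..<k}"
    by auto
  ultimately show ?thesis
    using prob_hit_miss_event[OF fin _ _ _ p, of "Some ` {1..<k}" "{Some k}" f]
    by (simp add: next_freq_prob_def prod.reindex card_dom_freq mult.commute)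
qed

lemma set_pmf_explore_stepE:
  assumes "s \<in> set_pmf (explore_step K p (f, U))" and "finite U" and "U \<noteq> {}"
  obtains v j where "v \<in> U" and "j \<le> K" and "s = (f(v \<mapsto> j), U - {v})"
proof -
  obtain v S where "v \<in> U" and "s = (f(v \<mapsto> greedy_freq K f S), U - {v})"
    using assms unfolding explore_step_eq by auto
  then show ?thesis
    using that greedy_freq_le by blast
qed

lemma finite_set_pmf_explore_step:
  assumes "finite U" and "U \<noteq> {}"
  shows "finite (set_pmf (explore_step K p (f, U)))"
proof (rule finite_subset)
  show "set_pmf (explore_step K p (f, U)) \<subseteq> (\<lambda>(v, j). (f(v \<mapsto> j), U - {v})) ` (U \<times> {0..K})"
    by (force elim: set_pmf_explore_stepE[OF _ assms])
qed (use assms in auto)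

lemma freq_count_upd:
  assumes "v \<notin> dom f" and "finite (dom f)"
  shows "freq_count (f(v \<mapsto> j)) k = freq_count f k + (if j = k then 1 else 0)"
proof -
  have fin: "finite {u. f u = Some k}"
    using assms(2) by (rule finite_subset[rotated]) auto
  show ?thesis
  proof (cases "j = k")
    case True
    then have "{u. (f(v \<mapsto> j)) u = Some k} = insert v {u. f u = Some k}"
      by auto
    moreover have "v \<notin> {u. f u = Some k}"
      using assms(1) by auto
    ultimately show ?thesis
      using True fin by (simp add: freq_count_def)
  next
    case False
    then have "{u. (f(v \<mapsto> j)) u = Some k} = {u. f u = Some k}"
      using assms(1) by auto
    with False show ?thesis
      by (simp add: freq_count_def)
  qed
qed

lemma expectation_freq_count_explore_step:
  assumes k: "k \<in> {1..K}" and inv: "sfap_invariant n K (f, U)" and U: "U \<noteq> {}" and p: "0 \<le> p" "p \<le> 1"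
  shows "measure_pmf.expectation (explore_step K p (f, U)) (\<lambda>s. real (freq_count (fst s) k)) =
         real (freq_count f k) + next_freq_prob p f k"
proof -
  have finU: "finite U" and fin: "finite (dom f)" and dom: "dom f = {1..n} - U"
    using inv by (auto simp: sfap_invariant_def)
  let ?B = "bernoulli_field (dom f) p"
  have new_vertex: "measure_pmf.expectation (map_pmf (\<lambda>S. (f(v \<mapsto> greedy_freq K f S), U - {v})) ?B)
      (\<lambda>s. real (freq_count (fst s) k)) = real (freq_count f k) + next_freq_prob p f k"
    if v: "v \<in> U" for v
  proof -
    have "v \<notin> dom f"
      using v dom by auto
    then have "measure_pmf.expectation (map_pmf (\<lambda>S. (f(v \<mapsto> greedy_freq K f S), U - {v})) ?B)
        (\<lambda>s. real (freq_count (fst s) k)) =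
        measure_pmf.expectation ?B (\<lambda>S. real (freq_count f k) + indicator {S. greedy_freq K f S = k} S)"
      using fin by (auto simp: freq_count_upd indicator_def intro!: Bochner_Integration.integral_cong)
    also have "\<dots> = real (freq_count f k) + measure_pmf.prob ?B {S. greedy_freq K f S = k}"
      using fin by (subst Bochner_Integration.integral_add)
        (auto intro!: integrable_measure_pmf_finite finite_set_pmf_bernoulli_field)
    finally show ?thesis
      using prob_greedy_freq[OF k fin p] by simp
  qed
  have "measure_pmf.expectation (explore_step K p (f, U)) (\<lambda>s. real (freq_count (fst s) k)) =
        measure_pmf.expectation (pmf_of_set U) (\<lambda>v. measure_pmf.expectation
          (map_pmf (\<lambda>S. (f(v \<mapsto> greedy_freq K f S), U - {v})) ?B) (\<lambda>s. real (freq_count (fst s) k)))"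
    unfolding explore_step_eq
    by (rule expectation_bind_pmf_finite) (use finU U fin finite_set_pmf_bernoulli_field in auto)
  also have "\<dots> = measure_pmf.expectation (pmf_of_set U) (\<lambda>v. real (freq_count f k) + next_freq_prob p f k)"
    by (intro integral_cong_AE) (use new_vertex finU U in \<open>auto simp: AE_measure_pmf_iff\<close>)
  finally show ?thesis
    by simp
qed

section \<open>Trajectories and the martingale\<close>

definition valid_traj :: "nat \<Rightarrow> nat \<Rightarrow> nat \<Rightarrow> sfap_state list \<Rightarrow> bool" where
  "valid_traj n K t tr \<longleftrightarrow> length tr = Suc t \<and> tr ! 0 = (Map.empty, {1..n}) \<and>
     (\<forall>i\<le>t. sfap_invariant n K (tr ! i) \<and> card (snd (tr ! i)) = n - i) \<and>
     (\<forall>i<t. \<exists>v j. v \<in> snd (tr ! i) \<and> tr ! Suc i = ((fst (tr ! i))(v \<mapsto> j), snd (tr ! i) - {v}))"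

lemma valid_traj_last:
  assumes "valid_traj n K t tr" and "t < n"
  shows "last tr = tr ! t" and "sfap_invariant n K (last tr)" and "snd (last tr) \<noteq> {}"
    and "finite (set_pmf (explore_step K p (last tr)))"
proof -
  show last: "last tr = tr ! t"
    using assms(1) by (cases tr rule: rev_cases) (auto simp: valid_traj_def)
  show inv: "sfap_invariant n K (last tr)"
    using assms(1) by (simp add: last valid_traj_def)
  have "card (snd (last tr)) = n - t"
    using assms(1) by (simp add: last valid_traj_def)
  then show ne: "snd (last tr) \<noteq> {}"
    using assms(2) by auto
  show "finite (set_pmf (explore_step K p (last tr)))"
    using finite_set_pmf_explore_step[of "snd (last tr)" K p "fst (last tr)"] inv ne
    by (simp add: sfap_invariant_def)
qed

lemma valid_traj_snoc:
  assumes tr: "valid_traj n K t tr" and t: "t < n" and s: "s \<in> set_pmf (explore_step K p (last tr))"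
  shows "valid_traj n K (Suc t) (tr @ [s])"
proof -
  have len: "length tr = Suc t"
    using tr by (simp add: valid_traj_def)
  obtain f U where fU: "tr ! t = (f, U)"
    by fastforce
  have inv: "sfap_invariant n K (f, U)" and card: "card U = n - t" and ne: "U \<noteq> {}"
    using valid_traj_last[OF tr t] tr fU by (auto simp: valid_traj_def)
  then have "finite U"
    by (simp add: sfap_invariant_def)
  moreover have "s \<in> set_pmf (explore_step K p (f, U))"
    using s valid_traj_last(1)[OF tr t] fU by simp
  ultimately obtain v j where v: "v \<in> U" "j \<le> K" and s_eq: "s = (f(v \<mapsto> j), U - {v})"
    using ne by (metis set_pmf_explore_stepE)
  have "sfap_invariant n K s" and "card (snd s) = n - Suc t"
    using inv v s_eq card \<open>finite U\<close> by (auto simp: sfap_invariant_def)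
  moreover have "(tr @ [s]) ! i = tr ! i" if "i \<le> t" for i
    using that len by (simp add: nth_append)
  moreover have "(tr @ [s]) ! Suc t = s"
    using len by (simp add: nth_append)
  ultimately show ?thesis
    using tr len fU v s_eq unfolding valid_traj_def
    by (auto simp: le_Suc_eq less_Suc_eq)
qed

lemma explore_traj_valid:
  assumes "t \<le> n"
  shows "finite (set_pmf (explore_traj K p n t))"
    and "tr \<in> set_pmf (explore_traj K p n t) \<Longrightarrow> valid_traj n K t tr"
proof -
  have "finite (set_pmf (explore_traj K p n t)) \<and> (\<forall>tr\<in>set_pmf (explore_traj K p n t). valid_traj n K t tr)"
    using assms
  proof (induction t)
    case 0
    then show ?case
      by (auto simp: valid_traj_def sfap_invariant_def)
  next
    case (Suc t)
    then have IH: "finite (set_pmf (explore_traj K p n t))"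
      "\<And>tr. tr \<in> set_pmf (explore_traj K p n t) \<Longrightarrow> valid_traj n K t tr"
      by auto
    have "finite (set_pmf (explore_step K p (last tr)))" if "tr \<in> set_pmf (explore_traj K p n t)" for tr
      using valid_traj_last(4)[OF IH(2)[OF that]] Suc.prems by simp
    then have "finite (set_pmf (explore_traj K p n (Suc t)))"
      using IH(1) by simp
    moreover have "valid_traj n K (Suc t) tr" if "tr \<in> set_pmf (explore_traj K p n (Suc t))" for tr
      using that IH(2) valid_traj_snoc[of n K t _ s p for s] Suc.prems by auto
    ultimately show ?case
      by blast
  qed
  then show "finite (set_pmf (explore_traj K p n t))"
    and "tr \<in> set_pmf (explore_traj K p n t) \<Longrightarrow> valid_traj n K t tr"
    by auto
qed

lemma take_explore_traj:
  assumes "t \<le> T" and "T \<le> n"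
  shows "map_pmf (take (Suc t)) (explore_traj K p n T) = explore_traj K p n t"
  using assms
proof (induction T)
  case (Suc T)
  show ?case
  proof (cases "t = Suc T")
    case True
    have "map_pmf (take (Suc t)) (explore_traj K p n (Suc T)) = map_pmf id (explore_traj K p n (Suc T))"
      using explore_traj_valid(2)[OF Suc.prems(2), of _ K p] True
      by (intro map_pmf_cong refl) (auto simp: valid_traj_def)
    with True show ?thesis
      by simp
  next
    case False
    then have tT: "t \<le> T"
      using Suc.prems by simp
    have "map_pmf (take (Suc t)) (explore_traj K p n (Suc T)) =
          bind_pmf (explore_traj K p n T) (\<lambda>tr. return_pmf (take (Suc t) tr))"
      unfolding explore_traj.simps map_bind_pmf pmf.map_comp o_def
    proof (intro bind_pmf_cong refl)
      fix tr assume "tr \<in> set_pmf (explore_traj K p n T)"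
      then have "length tr = Suc T"
        using explore_traj_valid(2)[of T n tr K p] Suc.prems by (simp add: valid_traj_def)
      then show "map_pmf (\<lambda>s. take (Suc t) (tr @ [s])) (explore_step K p (last tr)) = return_pmf (take (Suc t) tr)"
        using tT by (simp add: map_pmf_const)
    qed
    also have "\<dots> = explore_traj K p n t"
      using Suc.IH tT Suc.prems by (simp add: map_pmf_def)
    finally show ?thesis .
  qed
qed simp

definition freq_martingale :: "real \<Rightarrow> nat \<Rightarrow> sfap_state list \<Rightarrow> nat \<Rightarrow> real" where
  "freq_martingale p k tr t = real (freq_count (fst (tr ! t)) k) - (\<Sum>s<t. next_freq_prob p (fst (tr ! s)) k)"

lemma next_freq_prob_bounds:
  assumes "0 \<le> p" and "p \<le> 1"
  shows "0 \<le> next_freq_prob p f k" and "next_freq_prob p f k \<le> 1"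
  using assms unfolding next_freq_prob_def
  by (auto intro!: mult_nonneg_nonneg prod_nonneg mult_le_one prod_le_1 power_le_one)

lemma expectation_square_shift_le:
  fixes N :: "'a pmf" and D :: "'a \<Rightarrow> real"
  assumes fin: "finite (set_pmf N)" and mean: "measure_pmf.expectation N D = 0"
    and bound: "\<And>s. s \<in> set_pmf N \<Longrightarrow> \<bar>D s\<bar> \<le> 1"
  shows "measure_pmf.expectation N (\<lambda>s. (m + D s)\<^sup>2) \<le> m\<^sup>2 + 1"
proof -
  have int: "integrable N h" for h :: "'a \<Rightarrow> real"
    using fin by (rule integrable_measure_pmf_finite)
  have "measure_pmf.expectation N (\<lambda>s. (m + D s)\<^sup>2) =
        measure_pmf.expectation N (\<lambda>s. m\<^sup>2 + (2 * m * D s + (D s)\<^sup>2))"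
    by (simp add: power2_eq_square algebra_simps)
  also have "\<dots> = m\<^sup>2 + (2 * m * measure_pmf.expectation N D + measure_pmf.expectation N (\<lambda>s. (D s)\<^sup>2))"
    using int by simp
  also have "measure_pmf.expectation N (\<lambda>s. (D s)\<^sup>2) \<le> measure_pmf.expectation N (\<lambda>s. 1)"
    using bound by (intro integral_mono_AE[OF int int]) (auto simp: AE_measure_pmf_iff abs_square_le_1)
  finally show ?thesis
    using mean by simp
qed

lemma freq_martingale_step:
  assumes k: "k \<in> {1..K}" and p: "0 \<le> p" "p \<le> 1" and t: "t < n"
    and tr: "tr \<in> set_pmf (explore_traj K p n t)"
  shows "measure_pmf.expectation (explore_step K p (last tr)) (\<lambda>s. (freq_martingale p k (tr @ [s]) (Suc t))\<^sup>2)
           \<le> (freq_martingale p k tr t)\<^sup>2 + 1"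
proof -
  have valid: "valid_traj n K t tr"
    using explore_traj_valid(2)[of t n tr K p] tr t by simp
  obtain f U where fU: "last tr = (f, U)"
    by fastforce
  note last = valid_traj_last(1-3)[OF valid t, unfolded fU snd_conv]
  have fin: "finite (set_pmf (explore_step K p (f, U)))"
    using valid_traj_last(4)[OF valid t] fU by simp
  have len: "length tr = Suc t"
    using valid by (simp add: valid_traj_def)
  have ft: "fst (tr ! t) = f"
    using last(1) by (metis fst_conv)
  define D where "D s = real (freq_count (fst s) k) - (real (freq_count f k) + next_freq_prob p f k)"
    for s :: sfap_state
  have mart: "freq_martingale p k (tr @ [s]) (Suc t) = freq_martingale p k tr t + D s" for s
    using len ft unfolding freq_martingale_def D_def by (simp add: nth_append)
  have "measure_pmf.expectation (explore_step K p (f, U)) D =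
        measure_pmf.expectation (explore_step K p (f, U)) (\<lambda>s. real (freq_count (fst s) k))
          - (real (freq_count f k) + next_freq_prob p f k)"
    unfolding D_def using fin
    by (subst Bochner_Integration.integral_diff) (auto intro!: integrable_measure_pmf_finite)
  then have mean: "measure_pmf.expectation (explore_step K p (f, U)) D = 0"
    using expectation_freq_count_explore_step[OF k last(2,3) p] by simp
  have bound: "\<bar>D s\<bar> \<le> 1" if s: "s \<in> set_pmf (explore_step K p (f, U))" for s
  proof -
    have "finite U"
      using last(2) by (simp add: sfap_invariant_def)
    then obtain v j where v: "v \<in> U" and s_eq: "s = (f(v \<mapsto> j), U - {v})"
      using set_pmf_explore_stepE[OF s _ last(3)] by metis
    then have "v \<notin> dom f" "finite (dom f)"
      using last(2) by (auto simp: sfap_invariant_def)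
    then show ?thesis
      using next_freq_prob_bounds[OF p, of f k] unfolding D_def s_eq by (simp add: freq_count_upd)
  qed
  show ?thesis
    unfolding fU mart by (rule expectation_square_shift_le[OF fin mean bound])
qed

lemma expectation_freq_martingale_sq_le_upto:
  assumes k: "k \<in> {1..K}" and p: "0 \<le> p" "p \<le> 1" and t: "t \<le> n"
  shows "measure_pmf.expectation (explore_traj K p n t) (\<lambda>tr. (freq_martingale p k tr t)\<^sup>2) \<le> real t"
  using t
proof (induction t)
  case 0
  then show ?case
    by (simp add: freq_martingale_def freq_count_def)
next
  case (Suc t)
  let ?M = "explore_traj K p n t"
  have fin: "finite (set_pmf ?M)" and int: "integrable ?M h" for h :: "_ \<Rightarrow> real"
    using explore_traj_valid(1)[of t n K p] Suc.prems by (auto intro: integrable_measure_pmf_finite)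
  have step_fin: "finite (set_pmf (explore_step K p (last tr)))" if "tr \<in> set_pmf ?M" for tr
    using that Suc.prems by (intro valid_traj_last(4)[OF explore_traj_valid(2)]) auto
  have "measure_pmf.expectation (explore_traj K p n (Suc t)) (\<lambda>tr. (freq_martingale p k tr (Suc t))\<^sup>2) =
        measure_pmf.expectation ?M (\<lambda>tr. measure_pmf.expectation (explore_step K p (last tr))
          (\<lambda>s. (freq_martingale p k (tr @ [s]) (Suc t))\<^sup>2))"
    unfolding explore_traj.simps
    by (subst expectation_bind_pmf_finite)
      (use fin step_fin in auto)
  also have "\<dots> \<le> measure_pmf.expectation ?M (\<lambda>tr. (freq_martingale p k tr t)\<^sup>2 + 1)"
  proof (intro integral_mono_AE[OF int int], unfold AE_measure_pmf_iff, intro ballI)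
    fix tr assume "tr \<in> set_pmf ?M"
    then show "measure_pmf.expectation (explore_step K p (last tr))
        (\<lambda>s. (freq_martingale p k (tr @ [s]) (Suc t))\<^sup>2) \<le> (freq_martingale p k tr t)\<^sup>2 + 1"
      using Suc.prems by (intro freq_martingale_step[OF k p]) auto
  qed
  also have "\<dots> \<le> real t + 1"
    using Suc by (simp add: int)
  finally show ?case
    by simp
qed

lemma expectation_freq_martingale_sq_le:
  assumes k: "k \<in> {1..K}" and p: "0 \<le> p" "p \<le> 1" and t: "t \<le> n"
  shows "measure_pmf.expectation (explore_traj K p n n) (\<lambda>tr. (freq_martingale p k tr t)\<^sup>2) \<le> real t"
proof -
  have "measure_pmf.expectation (explore_traj K p n n) (\<lambda>tr. (freq_martingale p k tr t)\<^sup>2) =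
        measure_pmf.expectation (map_pmf (take (Suc t)) (explore_traj K p n n)) (\<lambda>tr. (freq_martingale p k tr t)\<^sup>2)"
    using explore_traj_valid(2)[of n n _ K p] t
    by (auto simp: AE_measure_pmf_iff valid_traj_def freq_martingale_def nth_take intro!: integral_cong_AE)
  then show ?thesis
    using take_explore_traj[OF t order_refl] expectation_freq_martingale_sq_le_upto[OF k p t] by simp
qed

lemma abs_power_diff_le:
  fixes a b :: real
  assumes "0 \<le> a" "a \<le> 1" "0 \<le> b" "b \<le> 1"
  shows "\<bar>a ^ m - b ^ m\<bar> \<le> real m * \<bar>a - b\<bar>"
proof (induction m)
  case (Suc m)
  have "a ^ Suc m - b ^ Suc m = a * (a ^ m - b ^ m) + b ^ m * (a - b)"
    by (simp add: algebra_simps)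
  then have "\<bar>a ^ Suc m - b ^ Suc m\<bar> \<le> \<bar>a\<bar> * \<bar>a ^ m - b ^ m\<bar> + \<bar>b ^ m\<bar> * \<bar>a - b\<bar>"
    by (metis abs_mult abs_triangle_ineq)
  also have "\<dots> \<le> 1 * \<bar>a ^ m - b ^ m\<bar> + 1 * \<bar>a - b\<bar>"
    using assms by (intro add_mono mult_right_mono) (auto simp: power_le_one)
  also have "\<dots> \<le> real m * \<bar>a - b\<bar> + \<bar>a - b\<bar>"
    using Suc by simp
  finally show ?case
    by (simp add: algebra_simps)
qed simp

lemma exp_neg_le_quadratic:
  fixes p :: real
  assumes "0 \<le> p"
  shows "exp (- p) \<le> 1 - p + p\<^sup>2"
proof -
  have "exp (- p) \<le> 1 / (1 + p)"
    using exp_ge_add_one_self[of p] assms by (simp add: exp_minus inverse_eq_divide frac_le)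
  also have "\<dots> \<le> 1 - p + p\<^sup>2"
  proof -
    have "1 \<le> (1 - p + p\<^sup>2) * (1 + p)"
      using assms by (simp add: power2_eq_square algebra_simps)
    then show ?thesis
      using assms by (simp add: divide_le_eq)
  qed
  finally show ?thesis .
qed

lemma abs_one_minus_power_exp_le:
  fixes p :: real
  assumes p: "0 \<le> p" "p \<le> 1"
  shows "\<bar>(1 - p) ^ m - exp (- (p * real m))\<bar> \<le> real m * p\<^sup>2"
proof -
  have e: "exp (- (p * real m)) = exp (- p) ^ m"
    by (metis exp_of_nat_mult mult.commute mult_minus_left)
  have "1 - p \<le> exp (- p)"
    using exp_ge_add_one_self[of "- p"] by simp
  then have "\<bar>(1 - p) - exp (- p)\<bar> \<le> p\<^sup>2"
    using exp_neg_le_quadratic[OF p(1)] by simp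
  moreover have "\<bar>(1 - p) ^ m - exp (- p) ^ m\<bar> \<le> real m * \<bar>(1 - p) - exp (- p)\<bar>"
    using p by (intro abs_power_diff_le) auto
  ultimately show ?thesis
    unfolding e by (meson mult_left_mono of_nat_0_le_iff order_trans)
qed

lemma abs_prod_diff_le:
  fixes x y :: "'a \<Rightarrow> real"
  assumes "finite I" and "\<And>i. i \<in> I \<Longrightarrow> 0 \<le> x i \<and> x i \<le> 1 \<and> 0 \<le> y i \<and> y i \<le> 1"
  shows "\<bar>prod x I - prod y I\<bar> \<le> (\<Sum>i\<in>I. \<bar>x i - y i\<bar>)"
  using assms
proof (induction I rule: finite_induct)
  case (insert a I)
  have b: "0 \<le> x a" "x a \<le> 1" "0 \<le> prod y I" "prod y I \<le> 1"
    using insert.prems by (auto intro!: prod_nonneg prod_le_1)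
  have "prod x (insert a I) - prod y (insert a I) = x a * (prod x I - prod y I) + (x a - y a) * prod y I"
    using insert.hyps by (simp add: algebra_simps)
  then have "\<bar>prod x (insert a I) - prod y (insert a I)\<bar> \<le>
             \<bar>x a\<bar> * \<bar>prod x I - prod y I\<bar> + \<bar>x a - y a\<bar> * \<bar>prod y I\<bar>"
    by (metis abs_mult abs_triangle_ineq)
  also have "\<dots> \<le> 1 * \<bar>prod x I - prod y I\<bar> + \<bar>x a - y a\<bar> * 1"
    using b by (intro add_mono mult_right_mono mult_left_mono) auto
  also have "\<dots> \<le> (\<Sum>i\<in>I. \<bar>x i - y i\<bar>) + \<bar>x a - y a\<bar>"
    using insert by simp
  finally show ?case
    using insert.hyps by (simp add: add.commute)
qed simp

text \<open>Both \<open>next_freq_prob\<close> and \<open>sfap_delta\<close> have this shape, with \<open>z r\<close> the probability of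
  not being blocked by frequency \<open>r\<close>.\<close>

definition first_success :: "(nat \<Rightarrow> real) \<Rightarrow> nat \<Rightarrow> real" where
  "first_success z k = z k * (\<Prod>r\<in>{1..<k}. 1 - z r)"

lemma first_success_lipschitz:
  assumes k: "k \<ge> 1" and zw: "\<And>r. r \<in> {1..k} \<Longrightarrow> 0 \<le> z r \<and> z r \<le> 1 \<and> 0 \<le> w r \<and> w r \<le> 1"
  shows "\<bar>first_success z k - first_success w k\<bar> \<le> (\<Sum>r\<in>{1..k}. \<bar>z r - w r\<bar>)"
proof -
  have prod_form: "first_success x k = (\<Prod>r\<in>{1..k}. if r = k then x r else 1 - x r)" for x
  proof -
    have "{1..k} = insert k {1..<k}"
      using k by auto
    then show ?thesis
      unfolding first_success_def by (auto intro!: prod.cong)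
  qed
  have "\<bar>first_success z k - first_success w k\<bar> \<le>
        (\<Sum>r\<in>{1..k}. \<bar>(if r = k then z r else 1 - z r) - (if r = k then w r else 1 - w r)\<bar>)"
    unfolding prod_form by (rule abs_prod_diff_le) (use zw in auto)
  also have "\<dots> = (\<Sum>r\<in>{1..k}. \<bar>z r - w r\<bar>)"
    by (intro sum.cong) auto
  finally show ?thesis .
qed

lemma next_freq_prob_first_success: "next_freq_prob p f k = first_success (\<lambda>r. (1 - p) ^ freq_count f r) k"
  unfolding next_freq_prob_def first_success_def ..

lemma sfap_delta_first_success: "sfap_delta c x k = first_success (\<lambda>r. exp (- c * x r)) k"
  unfolding sfap_delta_def first_success_def ..

lemma next_freq_prob_approx:
  assumes c: "c > 0" and n: "n > 0" "c / real n \<le> 1" and k: "k \<ge> 1" and count: "\<And>r. freq_count f r \<le> n"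
  shows "\<bar>next_freq_prob (c / real n) f k - sfap_delta c (\<lambda>r. real (freq_count f r) / real n) k\<bar>
           \<le> real k * c\<^sup>2 / real n"
proof -
  let ?p = "c / real n"
  have p: "0 \<le> ?p" "?p \<le> 1"
    using c n by auto
  have "\<bar>next_freq_prob ?p f k - sfap_delta c (\<lambda>r. real (freq_count f r) / real n) k\<bar> \<le>
        (\<Sum>r\<in>{1..k}. \<bar>(1 - ?p) ^ freq_count f r - exp (- c * (real (freq_count f r) / real n))\<bar>)"
    unfolding next_freq_prob_first_success sfap_delta_first_success
    by (rule first_success_lipschitz[OF k]) (use p c in \<open>auto intro!: power_le_one\<close>)
  also have "\<dots> \<le> (\<Sum>r\<in>{1..k}. c\<^sup>2 / real n)"
  proof (rule sum_mono)
    fix r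
    have "\<bar>(1 - ?p) ^ freq_count f r - exp (- c * (real (freq_count f r) / real n))\<bar> \<le>
          real (freq_count f r) * ?p\<^sup>2"
      using abs_one_minus_power_exp_le[OF p, of "freq_count f r"] by simp
    also have "\<dots> \<le> real n * ?p\<^sup>2"
      using count[of r] by (intro mult_right_mono) auto
    also have "\<dots> = c\<^sup>2 / real n"
      using n by (simp add: power2_eq_square)
    finally show "\<bar>(1 - ?p) ^ freq_count f r - exp (- c * (real (freq_count f r) / real n))\<bar> \<le> c\<^sup>2 / real n" .
  qed
  finally show ?thesis
    by simp
qed

lemma abs_exp_neg_diff_le:
  fixes x y c :: real
  assumes "c > 0" "0 \<le> x" "0 \<le> y"
  shows "\<bar>exp (- c * x) - exp (- c * y)\<bar> \<le> c * \<bar>x - y\<bar>"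
proof -
  have *: "exp (- c * a) - exp (- c * b) \<le> c * (b - a)" if "0 \<le> a" "a \<le> b" for a b :: real
  proof -
    have "exp (- c * a) - exp (- c * b) = exp (- c * a) * (1 - exp (- (c * (b - a))))"
      by (simp add: algebra_simps exp_add[symmetric])
    also have "\<dots> \<le> 1 * (c * (b - a))"
      using assms that exp_ge_add_one_self[of "- (c * (b - a))"] by (intro mult_mono) auto
    finally show ?thesis
      by simp
  qed
  show ?thesis
    using *[of x y] *[of y x] assms by (cases "x \<le> y") auto
qed

lemma sfap_delta_lipschitz:
  assumes c: "c > 0" and k: "k \<ge> 1" and xy: "\<And>r. r \<in> {1..k} \<Longrightarrow> 0 \<le> x r \<and> 0 \<le> y r"
  shows "\<bar>sfap_delta c x k - sfap_delta c y k\<bar> \<le> c * (\<Sum>r\<in>{1..k}. \<bar>x r - y r\<bar>)"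
proof -
  have "\<bar>sfap_delta c x k - sfap_delta c y k\<bar> \<le> (\<Sum>r\<in>{1..k}. \<bar>exp (- c * x r) - exp (- c * y r)\<bar>)"
    unfolding sfap_delta_first_success by (rule first_success_lipschitz[OF k]) (use xy c in auto)
  also have "\<dots> \<le> (\<Sum>r\<in>{1..k}. c * \<bar>x r - y r\<bar>)"
    by (rule sum_mono) (use abs_exp_neg_diff_le c xy in auto)
  finally show ?thesis
    by (simp add: sum_distrib_left)
qed

lemma sfap_alpha_increment_approx:
  assumes c: "c > 0" and n: "n > 0" and s: "s < n" and k: "k \<ge> 1"
  shows "\<bar>sfap_delta c (sfap_alpha c (real s / real n)) k -
           real n * (sfap_alpha c (real (Suc s) / real n) k - sfap_alpha c (real s / real n) k)\<bar>
         \<le> c * real k / real n"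
proof -
  let ?a = "real s / real n" and ?b = "real (Suc s) / real n"
  have a: "?a \<in> {0..1}" and b: "?b \<in> {0..1}" and ab: "?a < ?b" and ba: "?b - ?a = 1 / real n"
    using n s by (auto simp: divide_simps)
  obtain x where x: "x \<in> {?a..?b}"
    and eq: "sfap_alpha c ?b k - sfap_alpha c ?a k = sfap_delta c (sfap_alpha c x) k * (?b - ?a)"
    using sfap_alpha_mvt[OF c a b ab] by blast
  have x1: "x \<in> {0..1}"
    using x a b by (auto intro: order_trans[of 0 ?a x])
  have "\<bar>sfap_delta c (sfap_alpha c ?a) k - sfap_delta c (sfap_alpha c x) k\<bar> \<le>
        c * (\<Sum>r\<in>{1..k}. \<bar>sfap_alpha c ?a r - sfap_alpha c x r\<bar>)"
    by (rule sfap_delta_lipschitz[OF c k]) (use sfap_alpha_bounds[OF c a] sfap_alpha_bounds[OF c x1] in auto)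
  also have "\<dots> \<le> c * (\<Sum>r\<in>{1..k}. 1 / real n)"
  proof (intro mult_left_mono sum_mono)
    fix r
    show "\<bar>sfap_alpha c ?a r - sfap_alpha c x r\<bar> \<le> 1 / real n"
      using sfap_alpha_increment_bounds[OF c a x1, of r] x ba by auto
  qed (use c in auto)
  finally show ?thesis
    using eq ba n by simp
qed

section \<open>Deviation from the solution\<close>

definition traj_deviation :: "real \<Rightarrow> nat \<Rightarrow> nat \<Rightarrow> sfap_state list \<Rightarrow> nat \<Rightarrow> real" where
  "traj_deviation c n K tr t =
     (\<Sum>k\<in>{1..K}. \<bar>real (freq_count (fst (tr ! t)) k) - real n * sfap_alpha c (real t / real n) k\<bar>)"

lemma valid_traj_freq_count_le:
  assumes "valid_traj n K T tr" and "s \<le> T"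
  shows "freq_count (fst (tr ! s)) r \<le> n"
proof -
  have "dom (fst (tr ! s)) \<subseteq> {1..n}"
    using assms unfolding valid_traj_def sfap_invariant_def by auto
  then have "{u. fst (tr ! s) u = Some r} \<subseteq> {1..n}"
    by auto
  then show ?thesis
    unfolding freq_count_def by (metis card_atLeastAtMost card_mono diff_Suc_1 finite_atLeastAtMost)
qed

lemma drift_error_le:
  assumes c: "c > 0" and n: "n > 0" "c / real n \<le> 1" and k: "k \<in> {1..K}"
    and tr: "valid_traj n K n tr" and s: "s < n"
  shows "\<bar>next_freq_prob (c / real n) (fst (tr ! s)) k -
           real n * (sfap_alpha c (real (Suc s) / real n) k - sfap_alpha c (real s / real n) k)\<bar>
         \<le> real K * (c\<^sup>2 + c) / real n + c / real n * traj_deviation c n K tr s"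
proof -
  let ?a = "sfap_alpha c (real s / real n)"
  define x where "x r = real (freq_count (fst (tr ! s)) r) / real n" for r
  have k1: "k \<ge> 1" "k \<le> K"
    using k by auto
  have sa: "real s / real n \<in> {0..1}"
    using s n by auto
  have e1: "\<bar>next_freq_prob (c / real n) (fst (tr ! s)) k - sfap_delta c x k\<bar> \<le> real k * c\<^sup>2 / real n"
    unfolding x_def
    using valid_traj_freq_count_le[OF tr] s by (intro next_freq_prob_approx[OF c n k1(1)]) auto
  have "(\<Sum>r\<in>{1..k}. \<bar>x r - ?a r\<bar>) \<le> (\<Sum>r\<in>{1..K}. \<bar>x r - ?a r\<bar>)"
    using k1 by (intro sum_mono2) auto
  also have "\<dots> = traj_deviation c n K tr s / real n"
  proof -
    have "x r - ?a r = (real (freq_count (fst (tr ! s)) r) - real n * ?a r) / real n" for r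
      using n unfolding x_def by (simp add: field_simps)
    then show ?thesis
      unfolding traj_deviation_def sum_divide_distrib by simp
  qed
  finally have sum_le: "(\<Sum>r\<in>{1..k}. \<bar>x r - ?a r\<bar>) \<le> traj_deviation c n K tr s / real n" .
  have "\<bar>sfap_delta c x k - sfap_delta c ?a k\<bar> \<le> c * (\<Sum>r\<in>{1..k}. \<bar>x r - ?a r\<bar>)"
    by (rule sfap_delta_lipschitz[OF c k1(1)]) (use sfap_alpha_bounds[OF c sa] in \<open>auto simp: x_def\<close>)
  also have "\<dots> \<le> c * (traj_deviation c n K tr s / real n)"
    using sum_le c by (intro mult_left_mono) auto
  finally have e2: "\<bar>sfap_delta c x k - sfap_delta c ?a k\<bar> \<le> c / real n * traj_deviation c n K tr s"
    by simp
  have e3: "\<bar>sfap_delta c ?a k - real n * (sfap_alpha c (real (Suc s) / real n) k - ?a k)\<bar>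
              \<le> c * real k / real n"
    by (rule sfap_alpha_increment_approx[OF c n(1) s k1(1)])
  have "real k * (c\<^sup>2 + c) / real n \<le> real K * (c\<^sup>2 + c) / real n"
    using k1 c by (intro divide_right_mono mult_right_mono) auto
  moreover have "real k * c\<^sup>2 / real n + c * real k / real n = real k * (c\<^sup>2 + c) / real n"
    by (simp add: add_divide_distrib[symmetric] algebra_simps)
  ultimately show ?thesis
    using e1 e2 e3 by linarith
qed

lemma freq_count_deviation_le:
  assumes c: "c > 0" and n: "n > 0" "c / real n \<le> 1" and k: "k \<in> {1..K}"
    and tr: "valid_traj n K n tr" and t: "t \<le> n"
  shows "\<bar>real (freq_count (fst (tr ! t)) k) - real n * sfap_alpha c (real t / real n) k\<bar>
     \<le> \<bar>freq_martingale (c / real n) k tr t\<bar> + real K * (c\<^sup>2 + c) + c / real n * (\<Sum>s<t. traj_deviation c n K tr s)"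
proof -
  let ?p = "c / real n"
  define a where "a i = sfap_alpha c (real i / real n) k" for i
  define drift where "drift s = next_freq_prob ?p (fst (tr ! s)) k - real n * (a (Suc s) - a s)" for s
  have "(\<Sum>s<t. real n * (a (Suc s) - a s)) = real n * a t"
    using sum_lessThan_telescope[of a t] by (simp add: a_def sum_distrib_left[symmetric])
  then have "real (freq_count (fst (tr ! t)) k) - real n * a t = freq_martingale ?p k tr t + (\<Sum>s<t. drift s)"
    unfolding freq_martingale_def drift_def sum_subtractf by simp
  then have "\<bar>real (freq_count (fst (tr ! t)) k) - real n * a t\<bar> \<le> \<bar>freq_martingale ?p k tr t\<bar> + \<bar>\<Sum>s<t. drift s\<bar>"
    by (simp only: abs_triangle_ineq)
  also have "\<bar>\<Sum>s<t. drift s\<bar> \<le> (\<Sum>s<t. \<bar>drift s\<bar>)"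
    by (rule sum_abs)
  also have "(\<Sum>s<t. \<bar>drift s\<bar>) \<le> (\<Sum>s<t. real K * (c\<^sup>2 + c) / real n + c / real n * traj_deviation c n K tr s)"
    using t unfolding drift_def a_def by (intro sum_mono drift_error_le[OF c n k tr]) auto
  also have "\<dots> = real t / real n * (real K * (c\<^sup>2 + c)) + c / real n * (\<Sum>s<t. traj_deviation c n K tr s)"
    by (simp add: sum.distrib sum_distrib_left)
  also have "real t / real n * (real K * (c\<^sup>2 + c)) \<le> 1 * (real K * (c\<^sup>2 + c))"
    using t n c by (intro mult_right_mono) auto
  finally show ?thesis
    unfolding a_def by linarith
qed

lemma traj_deviation_le:
  assumes c: "c > 0" and n: "n > 0" "c / real n \<le> 1" and tr: "valid_traj n K n tr" and t: "t \<le> n"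
  shows "traj_deviation c n K tr t \<le> (\<Sum>k\<in>{1..K}. \<bar>freq_martingale (c / real n) k tr t\<bar>)
      + real K * (real K * (c\<^sup>2 + c)) + c * real K / real n * (\<Sum>s<t. traj_deviation c n K tr s)"
proof -
  have "traj_deviation c n K tr t \<le> (\<Sum>k\<in>{1..K}. \<bar>freq_martingale (c / real n) k tr t\<bar> + real K * (c\<^sup>2 + c)
          + c / real n * (\<Sum>s<t. traj_deviation c n K tr s))"
    unfolding traj_deviation_def[of c n K tr t]
    by (intro sum_mono freq_count_deviation_le[OF c n _ tr t]) simp
  then show ?thesis
    by (simp add: sum.distrib algebra_simps)
qed

lemma discrete_gronwall:
  fixes e :: "nat \<Rightarrow> real"
  assumes a: "a \<ge> 0" and rec: "\<And>t. t \<le> N \<Longrightarrow> e t \<le> B + a * (\<Sum>s<t. e s)" and t: "t \<le> N"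
  shows "e t \<le> B * (1 + a) ^ t"
  using t
proof (induction t rule: less_induct)
  case (less t)
  have geometric: "(\<Sum>s<t. a * (1 + a) ^ s) = (1 + a) ^ t - 1" for t
    by (induction t) (auto simp: algebra_simps)
  have "e t \<le> B + a * (\<Sum>s<t. e s)"
    using rec less.prems by simp
  also have "\<dots> \<le> B + a * (\<Sum>s<t. B * (1 + a) ^ s)"
    using less a by (intro add_left_mono mult_left_mono sum_mono) auto
  also have "a * (\<Sum>s<t. B * (1 + a) ^ s) = B * ((1 + a) ^ t - 1)"
    unfolding geometric[of t, symmetric] by (simp add: sum_distrib_left mult.left_commute)
  finally show ?case
    by (simp add: right_diff_distrib)
qed

lemma abs_le_amgm:
  fixes M :: real
  assumes "n > 0"
  shows "\<bar>M\<bar> \<le> (M\<^sup>2 / sqrt n + sqrt n) / 2"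
proof -
  have "0 \<le> (\<bar>M\<bar> - sqrt n)\<^sup>2"
    by simp
  then have "2 * \<bar>M\<bar> * sqrt n \<le> M\<^sup>2 + n"
    using assms by (simp add: power2_eq_square algebra_simps)
  then show ?thesis
    using assms by (simp add: field_simps)
qed

lemma expectation_abs_freq_martingale_le:
  assumes k: "k \<in> {1..K}" and p: "0 \<le> p" "p \<le> 1" and t: "t \<le> n" and n: "n > 0"
  shows "measure_pmf.expectation (explore_traj K p n n) (\<lambda>tr. \<bar>freq_martingale p k tr t\<bar>) \<le> sqrt (real n)"
proof -
  let ?M = "explore_traj K p n n"
  let ?E2 = "measure_pmf.expectation ?M (\<lambda>tr. (freq_martingale p k tr t)\<^sup>2)"
  have int: "integrable ?M h" for h :: "_ \<Rightarrow> real"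
    using explore_traj_valid(1)[of n n K p] by (auto intro: integrable_measure_pmf_finite)
  have "measure_pmf.expectation ?M (\<lambda>tr. \<bar>freq_martingale p k tr t\<bar>) \<le>
        measure_pmf.expectation ?M (\<lambda>tr. ((freq_martingale p k tr t)\<^sup>2 / sqrt n + sqrt n) / 2)"
    using n by (intro integral_mono[OF int int] abs_le_amgm) simp
  also have "\<dots> = (?E2 / sqrt n + sqrt n) / 2"
    using int by simp
  also have "\<dots> \<le> (real n / sqrt n + sqrt n) / 2"
    using expectation_freq_martingale_sq_le[OF k p t] t n by (simp add: divide_right_mono)
  also have "real n / sqrt n = sqrt n"
    by (simp add: real_div_sqrt)
  finally show ?thesis
    by simp
qed

lemma expectation_traj_deviation_le:
  assumes c: "c > 0" and n: "n > 0" "c / real n \<le> 1" and t: "t \<le> n"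
  shows "measure_pmf.expectation (explore_traj K (c / real n) n n) (\<lambda>tr. traj_deviation c n K tr t)
     \<le> (real K * sqrt (real n) + real K ^ 2 * (c\<^sup>2 + c)) * exp (c * real K)"
proof -
  let ?p = "c / real n"
  let ?M = "explore_traj K ?p n n"
  let ?e = "\<lambda>t. measure_pmf.expectation ?M (\<lambda>tr. traj_deviation c n K tr t)"
  let ?a = "c * real K / real n"
  let ?B = "real K * sqrt (real n) + real K ^ 2 * (c\<^sup>2 + c)"
  have p: "0 \<le> ?p" "?p \<le> 1"
    using c n by auto
  have int: "integrable ?M h" for h :: "_ \<Rightarrow> real"
    using explore_traj_valid(1)[of n n K ?p] by (auto intro: integrable_measure_pmf_finite)
  have rec: "?e t \<le> ?B + ?a * (\<Sum>s<t. ?e s)" if t: "t \<le> n" for t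
  proof -
    have "?e t \<le> measure_pmf.expectation ?M (\<lambda>tr. (\<Sum>k\<in>{1..K}. \<bar>freq_martingale ?p k tr t\<bar>)
                 + real K * (real K * (c\<^sup>2 + c)) + ?a * (\<Sum>s<t. traj_deviation c n K tr s))"
      using explore_traj_valid(2)[of n n _ K ?p] traj_deviation_le[OF c n _ t]
      by (intro integral_mono_AE[OF int int]) (auto simp: AE_measure_pmf_iff)
    also have "\<dots> = (\<Sum>k\<in>{1..K}. measure_pmf.expectation ?M (\<lambda>tr. \<bar>freq_martingale ?p k tr t\<bar>))
                 + real K * (real K * (c\<^sup>2 + c)) + ?a * (\<Sum>s<t. ?e s)"
      using int by (simp add: Bochner_Integration.integral_sum)
    also have "(\<Sum>k\<in>{1..K}. measure_pmf.expectation ?M (\<lambda>tr. \<bar>freq_martingale ?p k tr t\<bar>))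
                 \<le> (\<Sum>k\<in>{1..K}. sqrt (real n))"
      using t n by (intro sum_mono expectation_abs_freq_martingale_le[OF _ p]) auto
    finally show ?thesis
      by (simp add: power2_eq_square)
  qed
  have "?e t \<le> ?B * (1 + ?a) ^ t"
    using c by (intro discrete_gronwall[OF _ rec t]) auto
  also have "\<dots> \<le> ?B * exp (c * real K)"
  proof (rule mult_left_mono)
    have "(1 + ?a) ^ t \<le> (1 + ?a) ^ n"
      using t c by (intro power_increasing) auto
    also have "\<dots> \<le> exp (c * real K)"
    proof (rule exp_ge_one_plus_x_over_n_power_n)
      have "0 \<le> c * real K"
        using c by simp
      then show "- real n \<le> c * real K"
        using of_nat_0_le_iff[of n] by linarith
    qed (use n in simp)
    finally show "(1 + ?a) ^ t \<le> exp (c * real K)" .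
  qed (use c in simp)
  finally show ?thesis .
qed

section \<open>Convergence in probability\<close>

lemma alpha_n_eq: "alpha_n n tr k t = real (freq_count (fst (tr ! nat \<lfloor>real n * t\<rfloor>)) k) / real n"
  unfolding alpha_n_def A_count_def freq_count_def ..

lemma nat_floor_mult_bounds:
  assumes n: "n > 0" and t: "t \<in> {0..1}"
  defines "m \<equiv> nat \<lfloor>real n * t\<rfloor>"
  shows "m \<le> n" and "real m / real n \<le> t" and "t - real m / real n \<le> 1 / real n"
proof -
  have nt: "0 \<le> real n * t" "real n * t \<le> real n"
    using t by (auto intro: mult_left_le)
  have fl: "real m \<le> real n * t" "real n * t < real m + 1"
    unfolding m_def using nt by (auto simp: of_nat_nat)
  then show "m \<le> n"
    using nt by linarith
  show "real m / real n \<le> t"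
    using fl n by (simp add: divide_le_eq mult.commute)
  have "(real n * t - real m) / real n \<le> 1 / real n"
    using fl n by (intro divide_right_mono) auto
  then show "t - real m / real n \<le> 1 / real n"
    using n by (simp add: diff_divide_distrib)
qed

lemma alpha_n_deviation_le:
  assumes c: "c > 0" and n: "n > 0" and t: "t \<in> {0..1}" and k: "k \<in> {1..K}"
  shows "\<bar>alpha_n n tr k t - sfap_alpha c t k\<bar> \<le> (traj_deviation c n K tr (nat \<lfloor>real n * t\<rfloor>) + 1) / real n"
proof -
  define m where "m = nat \<lfloor>real n * t\<rfloor>"
  note m = nat_floor_mult_bounds[OF n t, folded m_def]
  have m1: "real m / real n \<in> {0..1}"
    using m(2) t by auto
  have "\<bar>real (freq_count (fst (tr ! m)) k) - real n * sfap_alpha c (real m / real n) k\<bar> \<le> traj_deviation c n K tr m"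
    unfolding traj_deviation_def using k by (intro member_le_sum) auto
  moreover have "alpha_n n tr k t - sfap_alpha c (real m / real n) k =
      (real (freq_count (fst (tr ! m)) k) - real n * sfap_alpha c (real m / real n) k) / real n"
    unfolding alpha_n_eq m_def[symmetric] using n by (simp add: field_simps)
  ultimately have "\<bar>alpha_n n tr k t - sfap_alpha c (real m / real n) k\<bar> \<le> traj_deviation c n K tr m / real n"
    using n by (simp add: divide_right_mono)
  moreover have "\<bar>sfap_alpha c (real m / real n) k - sfap_alpha c t k\<bar> \<le> 1 / real n"
    using sfap_alpha_increment_bounds[OF c m1 t m(2), of k] m(3) by auto
  ultimately show ?thesis
    unfolding m_def[symmetric] add_divide_distrib by linarith
qed

lemma alpha_n_tendsto_pointwise:
  assumes c: "c > 0" and t: "t \<in> {0..1}" and k: "k \<in> {1..K}" and eta: "eta > 0"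
  shows "(\<lambda>n. measure_pmf.prob (explore_traj K (c / real n) n n)
            {tr. \<bar>alpha_n n tr k t - sfap_alpha c t k\<bar> > eta}) \<longlonglongrightarrow> 0"
proof (rule tendsto_sandwich[OF _ _ tendsto_const])
  define B where "B n = (real K * sqrt (real n) + real K ^ 2 * (c\<^sup>2 + c)) * exp (c * real K)" for n :: nat
  show "(\<lambda>n. B n / (real n * eta - 1)) \<longlonglongrightarrow> 0"
    unfolding B_def using eta by real_asymp
  have "eventually (\<lambda>n. n > 0 \<and> c / real n \<le> 1 \<and> real n * eta > 1) sequentially"
    using c eta by (intro eventually_conj eventually_gt_at_top) real_asymp+
  then show "eventually (\<lambda>n. measure_pmf.prob (explore_traj K (c / real n) n n)
      {tr. \<bar>alpha_n n tr k t - sfap_alpha c t k\<bar> > eta} \<le> B n / (real n * eta - 1)) sequentially"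
  proof eventually_elim
    case (elim n)
    then have n: "n > 0" "c / real n \<le> 1" and ne: "real n * eta > 1"
      by auto
    let ?M = "explore_traj K (c / real n) n n"
    define m where "m = nat \<lfloor>real n * t\<rfloor>"
    have "{tr. \<bar>alpha_n n tr k t - sfap_alpha c t k\<bar> > eta} \<subseteq> {tr. real n * eta - 1 \<le> traj_deviation c n K tr m}"
    proof safe
      fix tr assume "\<bar>alpha_n n tr k t - sfap_alpha c t k\<bar> > eta"
      then have "eta < (traj_deviation c n K tr m + 1) / real n"
        using alpha_n_deviation_le[OF c n(1) t k, of tr] unfolding m_def by linarith
      then show "real n * eta - 1 \<le> traj_deviation c n K tr m"
        using n by (simp add: field_simps)
    qed
    then have "measure_pmf.prob ?M {tr. \<bar>alpha_n n tr k t - sfap_alpha c t k\<bar> > eta}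
        \<le> measure_pmf.prob ?M {tr. real n * eta - 1 \<le> traj_deviation c n K tr m}"
      by (intro measure_pmf.finite_measure_mono) auto
    also have "\<dots> \<le> measure_pmf.expectation ?M (\<lambda>tr. traj_deviation c n K tr m) / (real n * eta - 1)"
      using integral_Markov_inequality_measure[of ?M "\<lambda>tr. traj_deviation c n K tr m" UNIV "real n * eta - 1"]
        explore_traj_valid(1)[of n n K "c / real n"] ne
      by (auto intro: integrable_measure_pmf_finite simp: traj_deviation_def)
    also have "\<dots> \<le> B n / (real n * eta - 1)"
      unfolding B_def using expectation_traj_deviation_le[OF c n] nat_floor_mult_bounds(1)[OF n(1) t] ne
      by (simp add: divide_right_mono m_def)
    finally show ?case .
  qed
qed simp

lemma valid_traj_freq_count_mono:
  assumes tr: "valid_traj n K T tr" and ij: "i \<le> j" "j \<le> T"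
  shows "freq_count (fst (tr ! i)) k \<le> freq_count (fst (tr ! j)) k"
  using ij
proof (induction j)
  case (Suc j)
  show ?case
  proof (cases "i = Suc j")
    case False
    then have ij': "i \<le> j" "j < T"
      using Suc.prems by auto
    obtain f U where fU: "tr ! j = (f, U)"
      by fastforce
    obtain v l where v: "v \<in> U" and step: "tr ! Suc j = (f(v \<mapsto> l), U - {v})"
      using tr ij'(2) fU unfolding valid_traj_def by fastforce
    have "sfap_invariant n K (f, U)"
      using tr ij'(2) fU unfolding valid_traj_def by (metis less_imp_le)
    then have "v \<notin> dom f" "finite (dom f)"
      using v by (auto simp: sfap_invariant_def)
    then have "freq_count f k \<le> freq_count (fst (tr ! Suc j)) k"
      using freq_count_upd[of v f l k] step by simp
    then show ?thesis
      using Suc.IH ij' fU by simp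
  qed simp
qed simp

lemma alpha_n_mono:
  assumes tr: "valid_traj n K n tr" and n: "n > 0" and st: "s \<le> t" and s: "s \<in> {0..1}" and t: "t \<in> {0..1}"
  shows "alpha_n n tr k s \<le> alpha_n n tr k t"
proof -
  have "nat \<lfloor>real n * s\<rfloor> \<le> nat \<lfloor>real n * t\<rfloor>"
    using st by (intro nat_mono floor_mono mult_left_mono) auto
  then have "freq_count (fst (tr ! nat \<lfloor>real n * s\<rfloor>)) k \<le> freq_count (fst (tr ! nat \<lfloor>real n * t\<rfloor>)) k"
    using nat_floor_mult_bounds(1)[OF n t] by (intro valid_traj_freq_count_mono[OF tr]) auto
  then show ?thesis
    unfolding alpha_n_eq by (simp add: divide_right_mono)
qed

lemma grid_cell_exists:
  fixes L :: nat
  assumes L: "L \<ge> 1" and t: "t \<in> {0..1}"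
  obtains j where "j + 1 \<le> L" and "real j / real L \<le> t" and "t \<le> real (j + 1) / real L"
proof
  define j where "j = min (nat \<lfloor>real L * t\<rfloor>) (L - 1)"
  show "j + 1 \<le> L"
    using L unfolding j_def by linarith
  have "real j \<le> real L * t"
    using t unfolding j_def by (auto simp: min_def of_nat_nat le_nat_iff) linarith+
  then show "real j / real L \<le> t"
    using L by (simp add: divide_le_eq mult.commute)
  show "t \<le> real (j + 1) / real L"
  proof (cases "nat \<lfloor>real L * t\<rfloor> \<le> L - 1")
    case True
    then have "real L * t \<le> real j + 1"
      unfolding j_def using t by (simp add: of_nat_nat)
    then show ?thesis
      using L by (simp add: le_divide_eq mult.commute)
  next
    case False
    then have "real (j + 1) = real L"
      unfolding j_def using L by simp
    then show ?thesis
      using t L by simp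
  qed
qed

lemma grid_approx_monotone:
  fixes f g :: "real \<Rightarrow> real" and L :: nat
  assumes L: "L \<ge> 1"
    and f_mono: "\<And>s t. s \<in> {0..1} \<Longrightarrow> t \<in> {0..1} \<Longrightarrow> s \<le> t \<Longrightarrow> f s \<le> f t"
    and g_incr: "\<And>s t. s \<in> {0..1} \<Longrightarrow> t \<in> {0..1} \<Longrightarrow> s \<le> t \<Longrightarrow> 0 \<le> g t - g s \<and> g t - g s \<le> t - s"
    and grid: "\<And>j. j \<le> L \<Longrightarrow> \<bar>f (real j / real L) - g (real j / real L)\<bar> \<le> e"
    and t: "t \<in> {0..1}"
  shows "\<bar>f t - g t\<bar> \<le> e + 1 / real L"
proof -
  obtain j where jL: "j + 1 \<le> L" and lo: "real j / real L \<le> t" and hi: "t \<le> real (j + 1) / real L"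
    using grid_cell_exists[OF L t] .
  have g0: "real j / real L \<in> {0..1}" and g1: "real (j + 1) / real L \<in> {0..1}"
    using jL by auto
  have width: "real (j + 1) / real L - real j / real L = 1 / real L"
    using L by (simp add: field_simps)
  have "f (real j / real L) \<le> f t" "f t \<le> f (real (j + 1) / real L)"
    using f_mono g0 g1 t lo hi by auto
  moreover have "0 \<le> g t - g (real j / real L)" "0 \<le> g (real (j + 1) / real L) - g t"
    "g (real (j + 1) / real L) - g (real j / real L) \<le> 1 / real L"
    using g_incr[OF g0 t lo] g_incr[OF t g1 hi] g_incr[of "real j / real L" "real (j + 1) / real L"] g0 g1 width
    by auto
  moreover have "\<bar>f (real j / real L) - g (real j / real L)\<bar> \<le> e"
    "\<bar>f (real (j + 1) / real L) - g (real (j + 1) / real L)\<bar> \<le> e"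
    using grid[of j] grid[of "j + 1"] jL by auto
  ultimately show ?thesis
    by linarith
qed

lemma alpha_n_grid_bound:
  assumes c: "c > 0" and tr: "valid_traj n K n tr" and n: "n > 0" and L: "L \<ge> 1" and t: "t \<in> {0..1}"
    and grid: "\<And>j. j \<le> L \<Longrightarrow> \<bar>alpha_n n tr k (real j / real L) - sfap_alpha c (real j / real L) k\<bar> \<le> e"
  shows "\<bar>alpha_n n tr k t - sfap_alpha c t k\<bar> \<le> e + 1 / real L"
  by (rule grid_approx_monotone[where f="\<lambda>t. alpha_n n tr k t" and g="\<lambda>t. sfap_alpha c t k", OF L _ _ grid t])
    (use alpha_n_mono[OF tr n] sfap_alpha_increment_bounds[OF c] in auto)

lemma alpha_n_far_subset_grid:
  assumes c: "c > 0" and n: "n > 0" and L: "L \<ge> 1" and e: "e + 1 / real L < eps"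
  shows "{tr. \<exists>t\<in>{0..1}. \<exists>k\<in>{1..K}. \<bar>alpha_n n tr k t - sfap_alpha c t k\<bar> > eps} \<inter> {tr. valid_traj n K n tr}
    \<subseteq> (\<Union>(j, k)\<in>{0..L} \<times> {1..K}. {tr. \<bar>alpha_n n tr k (real j / real L) - sfap_alpha c (real j / real L) k\<bar> > e})"
proof safe
  fix tr t k assume tr: "valid_traj n K n tr" and t: "t \<in> {0..1}" and k: "k \<in> {1..K}"
    and far: "\<bar>alpha_n n tr k t - sfap_alpha c t k\<bar> > eps"
  show "tr \<in> (\<Union>(j, k)\<in>{0..L} \<times> {1..K}. {tr. \<bar>alpha_n n tr k (real j / real L) - sfap_alpha c (real j / real L) k\<bar> > e})"
  proof (rule ccontr)
    assume "\<not> ?thesis"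
    then have "\<And>j. j \<le> L \<Longrightarrow> \<bar>alpha_n n tr k (real j / real L) - sfap_alpha c (real j / real L) k\<bar> \<le> e"
      using k by fastforce
    then have "\<bar>alpha_n n tr k t - sfap_alpha c t k\<bar> \<le> e + 1 / real L"
      by (rule alpha_n_grid_bound[OF c tr n L t])
    with far e show False
      by linarith
  qed
qed

lemma alpha_n_tendsto_uniform:
  assumes c: "c > 0" and eps: "eps > 0"
  shows "(\<lambda>n. measure_pmf.prob (explore_traj K (c / real n) n n)
            {tr. \<exists>t\<in>{0..1}. \<exists>k\<in>{1..K}. \<bar>alpha_n n tr k t - sfap_alpha c t k\<bar> > eps}) \<longlonglongrightarrow> 0"
proof -
  obtain L :: nat where L: "real L > 2 / eps"
    using reals_Archimedean2 by blast
  have L1: "L \<ge> 1"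
    using L eps by (cases L) (auto simp: divide_less_0_iff)
  have Leps: "eps / 2 + 1 / real L < eps"
    using L eps L1 by (simp add: field_simps)
  define G where "G = {0..L} \<times> {1..K}"
  define bad where "bad n = (\<lambda>(j, k). {tr. \<bar>alpha_n n tr k (real j / real L) - sfap_alpha c (real j / real L) k\<bar> > eps / 2})"
    for n
  let ?M = "\<lambda>n. explore_traj K (c / real n) n n"
  define far where "far n = {tr. \<exists>t\<in>{0..1}. \<exists>k\<in>{1..K}. \<bar>alpha_n n tr k t - sfap_alpha c t k\<bar> > eps}" for n
  have lim: "(\<lambda>n. \<Sum>g\<in>G. measure_pmf.prob (?M n) (bad n g)) \<longlonglongrightarrow> 0"
  proof (rule tendsto_null_sum)
    fix g assume "g \<in> G"
    then obtain j k where g: "g = (j, k)" "j \<le> L" "k \<in> {1..K}"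
      unfolding G_def by auto
    then have "real j / real L \<in> {0..1}"
      using L1 by (simp add: field_simps)
    then show "(\<lambda>n. measure_pmf.prob (?M n) (bad n g)) \<longlonglongrightarrow> 0"
      unfolding g bad_def using alpha_n_tendsto_pointwise[OF c _ g(3), of _ "eps / 2"] eps by simp
  qed
  have "measure_pmf.prob (?M n) (far n) \<le> (\<Sum>g\<in>G. measure_pmf.prob (?M n) (bad n g))" if n: "n > 0" for n
  proof -
    have "far n \<inter> set_pmf (?M n) \<subseteq> far n \<inter> {tr. valid_traj n K n tr}"
      by (rule Int_mono[OF order_refl]) (use explore_traj_valid(2)[OF order_refl] in auto)
    also have "\<dots> \<subseteq> (\<Union>g\<in>G. bad n g)"
      unfolding far_def G_def bad_def by (rule alpha_n_far_subset_grid[OF c n L1 Leps])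
    finally have "far n \<inter> set_pmf (?M n) \<subseteq> (\<Union>g\<in>G. bad n g)" .
    then have "measure_pmf.prob (?M n) (far n) \<le> measure_pmf.prob (?M n) (\<Union>g\<in>G. bad n g)"
      by (subst measure_Int_set_pmf[symmetric]) (rule measure_pmf.finite_measure_mono; simp)
    also have "\<dots> \<le> (\<Sum>g\<in>G. measure_pmf.prob (?M n) (bad n g))"
      unfolding G_def by (rule measure_pmf.finite_measure_subadditive_finite) auto
    finally show ?thesis .
  qed
  then have "eventually (\<lambda>n. measure_pmf.prob (?M n) (far n) \<le> (\<Sum>g\<in>G. measure_pmf.prob (?M n) (bad n g))) sequentially"
    by (rule eventually_mono[OF eventually_gt_at_top[of 0]])
  then show ?thesis
    unfolding far_def by (intro tendsto_sandwich[OF _ _ tendsto_const lim]) simp_all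
qed

section \<open>Coupling with the SFAP model\<close>

primrec explore_run :: "nat \<Rightarrow> real \<Rightarrow> nat \<Rightarrow> sfap_state \<Rightarrow> sfap_state pmf" where
  "explore_run K p 0 s = return_pmf s"
| "explore_run K p (Suc t) s = bind_pmf (explore_step K p s) (explore_run K p t)"

lemma explore_run_Suc_right: "explore_run K p (Suc t) s = bind_pmf (explore_run K p t s) (explore_step K p)"
proof (induction t arbitrary: s)
  case 0
  have "explore_run K p 0 = return_pmf"
    by (rule ext) simp
  then show ?case
    by (simp add: bind_return_pmf bind_return_pmf')
next
  case (Suc t)
  have "explore_run K p (Suc (Suc t)) s = bind_pmf (explore_step K p s) (\<lambda>s'. bind_pmf (explore_run K p t s') (explore_step K p))"
    unfolding explore_run.simps(2)[of _ _ "Suc t"] by (intro bind_pmf_cong refl Suc.IH)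
  then show ?case
    by (simp add: bind_assoc_pmf)
qed

lemma map_pmf_last_explore_traj: "map_pmf last (explore_traj K p n t) = explore_run K p t (Map.empty, {1..n})"
proof (induction t)
  case (Suc t)
  have "map_pmf last (explore_traj K p n (Suc t)) = bind_pmf (map_pmf last (explore_traj K p n t)) (explore_step K p)"
    by (simp add: map_bind_pmf pmf.map_comp o_def bind_map_pmf)
  then show ?case
    using Suc by (simp only: explore_run_Suc_right)
qed simp

text \<open>The potential edges, encoded as \<open>(i, j)\<close> with \<open>i < j\<close> as in \<open>erdos_renyi\<close>, that are still
  unrevealed when exactly the vertices in \<open>W\<close> have been explored.\<close>

definition unrevealed_pairs :: "nat set \<Rightarrow> nat set \<Rightarrow> (nat \<times> nat) set" where
  "unrevealed_pairs W U = {(i, j). i < j \<and> i \<in> W \<union> U \<and> j \<in> W \<union> U \<and> (i \<in> U \<or> j \<in> U)}"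

definition edge_rel :: "(nat \<times> nat \<Rightarrow> bool) \<Rightarrow> nat \<Rightarrow> nat \<Rightarrow> bool" where
  "edge_rel X v u \<longleftrightarrow> v \<noteq> u \<and> X (min u v, max u v)"

lemma finite_unrevealed_pairs: "finite W \<Longrightarrow> finite U \<Longrightarrow> finite (unrevealed_pairs W U)"
  by (rule finite_subset[of _ "(W \<union> U) \<times> (W \<union> U)"]) (auto simp: unrevealed_pairs_def)

lemma unrevealed_pairs_split:
  assumes v: "v \<in> U" and disj: "W \<inter> U = {}"
  shows "unrevealed_pairs W U = (\<lambda>u. (min u v, max u v)) ` W \<union> unrevealed_pairs (insert v W) (U - {v})"
    and "(\<lambda>u. (min u v, max u v)) ` W \<inter> unrevealed_pairs (insert v W) (U - {v}) = {}"
proof -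
  show "(\<lambda>u. (min u v, max u v)) ` W \<inter> unrevealed_pairs (insert v W) (U - {v}) = {}"
    using v disj by (auto simp: unrevealed_pairs_def min_def max_def split: if_splits)
  show "unrevealed_pairs W U = (\<lambda>u. (min u v, max u v)) ` W \<union> unrevealed_pairs (insert v W) (U - {v})"
  proof (intro equalityI subsetI)
    fix x assume x: "x \<in> unrevealed_pairs W U"
    obtain i j where ij: "x = (i, j)"
      by fastforce
    show "x \<in> (\<lambda>u. (min u v, max u v)) ` W \<union> unrevealed_pairs (insert v W) (U - {v})"
    proof (cases "(i = v \<and> j \<in> W) \<or> (j = v \<and> i \<in> W)")
      case True
      then have "x = (min (if i = v then j else i) v, max (if i = v then j else i) v)" "(if i = v then j else i) \<in> W"
        using x ij unfolding unrevealed_pairs_def by auto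
      then show ?thesis
        by blast
    next
      case False
      then show ?thesis
        using x ij disj unfolding unrevealed_pairs_def by auto
    qed
  next
    fix x assume "x \<in> (\<lambda>u. (min u v, max u v)) ` W \<union> unrevealed_pairs (insert v W) (U - {v})"
    moreover have "v \<notin> W"
      using v disj by auto
    ultimately show "x \<in> unrevealed_pairs W U"
      using v disj unfolding unrevealed_pairs_def by (auto simp: min_def max_def less_le split: if_splits)
  qed
qed

lemma sfap_assign_cong:
  "(\<And>w u. w \<in> set vs \<Longrightarrow> E w u = E' w u) \<Longrightarrow> sfap_assign K E g vs = sfap_assign K E' g vs"
proof (induction vs arbitrary: g)
  case (Cons v vs)
  have "{k. \<exists>u. E v u \<and> g u = Some k} = {k. \<exists>u. E' v u \<and> g u = Some k}"
    using Cons.prems by auto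
  then show ?case
    using Cons by (simp add: Let_def)
qed simp

lemma sfap_assign_Cons_edge_rel:
  assumes "v \<notin> dom g"
  shows "sfap_assign K (edge_rel X) g (v # vs) =
         sfap_assign K (edge_rel X) (g(v \<mapsto> greedy_freq K g (X \<circ> (\<lambda>u. (min u v, max u v))))) vs"
proof -
  have "{k. \<exists>u. edge_rel X v u \<and> g u = Some k} =
        {k. 1 \<le> k \<and> (\<exists>u\<in>dom g. (X \<circ> (\<lambda>u. (min u v, max u v))) u \<and> g u = Some k)} \<union>
        {k. k < 1 \<and> (\<exists>u. edge_rel X v u \<and> g u = Some k)}"
    using assms by (auto simp: edge_rel_def)
  then have "{1..K} - {k. \<exists>u. edge_rel X v u \<and> g u = Some k} =
        {1..K} - {k. 1 \<le> k \<and> (\<exists>u\<in>dom g. (X \<circ> (\<lambda>u. (min u v, max u v))) u \<and> g u = Some k)}"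
    by auto
  then show ?thesis
    by (simp add: greedy_freq_def Let_def)
qed

lemma greedy_freq_cong: "(\<And>u. u \<in> dom f \<Longrightarrow> S u = S' u) \<Longrightarrow> greedy_freq K f S = greedy_freq K f S'"
  unfolding greedy_freq_def by (metis (no_types, lifting))

lemma sfap_assign_ignores_pairs_at:
  assumes vs: "set vs \<subseteq> U - {v}" and disj: "W \<inter> U = {}"
  shows "sfap_assign K (edge_rel (\<lambda>x. if x \<in> (\<lambda>u. (min u v, max u v)) ` W then X1 x else X2 x)) g vs =
         sfap_assign K (edge_rel X2) g vs"
proof (rule sfap_assign_cong)
  fix w u assume w: "w \<in> set vs"
  then have "w \<notin> W" "w \<noteq> v"
    using vs disj by auto
  then have "(min u w, max u w) \<notin> (\<lambda>u. (min u v, max u v)) ` W" if "u \<noteq> w"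
    using that by (auto simp: min_def max_def split: if_splits)
  then show "edge_rel (\<lambda>x. if x \<in> (\<lambda>u. (min u v, max u v)) ` W then X1 x else X2 x) w u = edge_rel X2 w u"
    unfolding edge_rel_def by auto
qed

lemma bernoulli_field_pairs_at:
  assumes "finite W" and "v \<notin> W"
  shows "map_pmf (\<lambda>X. X \<circ> (\<lambda>u. (min u v, max u v))) (bernoulli_field ((\<lambda>u. (min u v, max u v)) ` W) p) =
         bernoulli_field W p"
proof (rule Pi_pmf_bij_betw[symmetric])
  show "bij_betw (\<lambda>u. (min u v, max u v)) W ((\<lambda>u. (min u v, max u v)) ` W)"
    by (rule inj_on_imp_bij_betw) (auto simp: inj_on_def min_def max_def split: if_splits)
  show "\<And>x. x \<notin> W \<Longrightarrow> (min x v, max x v) \<notin> (\<lambda>u. (min u v, max u v)) ` W"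
    using assms(2) by (auto simp: min_def max_def split: if_splits)
qed (use assms in auto)

lemma sfap_assign_first_step:
  assumes finU: "finite U" and fing: "finite (dom g)" and disj: "dom g \<inter> U = {}" and v: "v \<in> U"
    and rest: "\<And>g'. dom g' = insert v (dom g) \<Longrightarrow>
       bind_pmf (bernoulli_field (unrevealed_pairs (dom g') (U - {v})) p)
         (\<lambda>X. map_pmf (sfap_assign K (edge_rel X) g') (pmf_of_set (permutations_of_set (U - {v}))))
       = map_pmf fst (explore_run K p (card U - 1) (g', U - {v}))"
  shows "bind_pmf (bernoulli_field (unrevealed_pairs (dom g) U) p)
           (\<lambda>X. map_pmf (\<lambda>vs. sfap_assign K (edge_rel X) g (v # vs)) (pmf_of_set (permutations_of_set (U - {v}))))
         = bind_pmf (bernoulli_field (dom g) p)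
             (\<lambda>S. map_pmf fst (explore_run K p (card U - 1) (g(v \<mapsto> greedy_freq K g S), U - {v})))"
proof -
  define h where "h = (\<lambda>u. (min u v, max u v))"
  define P' where "P' = unrevealed_pairs (insert v (dom g)) (U - {v})"
  define merge where "merge X1 X2 = (\<lambda>x. if x \<in> h ` dom g then X1 x else X2 x)" for X1 X2 :: "nat \<times> nat \<Rightarrow> bool"
  let ?perms = "pmf_of_set (permutations_of_set (U - {v}))"
  let ?g' = "\<lambda>X1. g(v \<mapsto> greedy_freq K g (X1 \<circ> h))"
  have vg: "v \<notin> dom g"
    using v disj by auto
  have split: "bernoulli_field (unrevealed_pairs (dom g) U) p =
        map_pmf (\<lambda>(X1, X2). merge X1 X2) (pair_pmf (bernoulli_field (h ` dom g) p) (bernoulli_field P' p))"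
    unfolding unrevealed_pairs_split[OF v disj] merge_def h_def P'_def
    using unrevealed_pairs_split(2)[OF v disj] fing finU
    by (intro Pi_pmf_union) (auto intro: finite_unrevealed_pairs)
  have first_vertex: "sfap_assign K (edge_rel (merge X1 X2)) g (v # vs) = sfap_assign K (edge_rel X2) (?g' X1) vs"
    if "vs \<in> set_pmf ?perms" for X1 X2 vs
  proof -
    have "vs \<in> permutations_of_set (U - {v})"
      using that finU by (subst (asm) set_pmf_of_set) auto
    then have "set vs \<subseteq> U - {v}"
      by (auto simp: permutations_of_set_def)
    have "greedy_freq K g (merge X1 X2 \<circ> h) = greedy_freq K g (X1 \<circ> h)"
      by (rule greedy_freq_cong) (simp add: merge_def)
    then have "sfap_assign K (edge_rel (merge X1 X2)) g (v # vs) = sfap_assign K (edge_rel (merge X1 X2)) (?g' X1) vs"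
      unfolding sfap_assign_Cons_edge_rel[OF vg] h_def by simp
    also have "\<dots> = sfap_assign K (edge_rel X2) (?g' X1) vs"
      unfolding merge_def h_def by (rule sfap_assign_ignores_pairs_at[OF \<open>set vs \<subseteq> U - {v}\<close> disj])
    finally show ?thesis .
  qed
  have "bind_pmf (bernoulli_field (unrevealed_pairs (dom g) U) p)
           (\<lambda>X. map_pmf (\<lambda>vs. sfap_assign K (edge_rel X) g (v # vs)) ?perms)
      = bind_pmf (bernoulli_field (h ` dom g) p) (\<lambda>X1. bind_pmf (bernoulli_field P' p) (\<lambda>X2.
          map_pmf (\<lambda>vs. sfap_assign K (edge_rel (merge X1 X2)) g (v # vs)) ?perms))"
    unfolding split bind_map_pmf pair_pmf_def bind_assoc_pmf bind_return_pmf by simp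
  also have "\<dots> = bind_pmf (bernoulli_field (h ` dom g) p) (\<lambda>X1. bind_pmf (bernoulli_field P' p) (\<lambda>X2.
          map_pmf (sfap_assign K (edge_rel X2) (?g' X1)) ?perms))"
    by (intro bind_pmf_cong refl map_pmf_cong first_vertex)
  also have "\<dots> = bind_pmf (bernoulli_field (h ` dom g) p) (\<lambda>X1. map_pmf fst (explore_run K p (card U - 1) (?g' X1, U - {v})))"
    unfolding P'_def by (intro bind_pmf_cong refl, subst rest[symmetric]) auto
  also have "\<dots> = bind_pmf (map_pmf (\<lambda>X1. X1 \<circ> h) (bernoulli_field (h ` dom g) p))
      (\<lambda>S. map_pmf fst (explore_run K p (card U - 1) (g(v \<mapsto> greedy_freq K g S), U - {v})))"
    by (simp add: bind_map_pmf)
  also have "map_pmf (\<lambda>X1. X1 \<circ> h) (bernoulli_field (h ` dom g) p) = bernoulli_field (dom g) p"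
    unfolding h_def by (rule bernoulli_field_pairs_at[OF fing vg])
  finally show ?thesis .
qed

text \<open>Revealing the edges of \<open>G(n, p)\<close> only when a vertex is explored turns the SFAP model into the
  exploration process.\<close>

lemma sfap_assign_eq_explore_run:
  assumes "finite U" and "finite (dom g)" and "dom g \<inter> U = {}"
  shows "bind_pmf (bernoulli_field (unrevealed_pairs (dom g) U) p)
           (\<lambda>X. map_pmf (sfap_assign K (edge_rel X) g) (pmf_of_set (permutations_of_set U)))
         = map_pmf fst (explore_run K p (card U) (g, U))"
  using assms
proof (induction "card U" arbitrary: g U)
  case 0
  then have "U = {}" "unrevealed_pairs (dom g) {} = {}"
    by (auto simp: unrevealed_pairs_def)
  then show ?case
    by (simp add: map_pmf_def bind_return_pmf pmf_of_set_singleton)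
next
  case (Suc m)
  then have U: "finite U" "U \<noteq> {}" and m: "m = card U - 1"
    by auto
  have "bind_pmf (bernoulli_field (unrevealed_pairs (dom g) U) p)
           (\<lambda>X. map_pmf (sfap_assign K (edge_rel X) g) (pmf_of_set (permutations_of_set U)))
      = bind_pmf (pmf_of_set U) (\<lambda>v. bind_pmf (bernoulli_field (unrevealed_pairs (dom g) U) p) (\<lambda>X.
          map_pmf (\<lambda>vs. sfap_assign K (edge_rel X) g (v # vs)) (pmf_of_set (permutations_of_set (U - {v})))))"
    unfolding random_permutation_of_set[OF U]
    by (subst bind_commute_pmf) (simp add: map_bind_pmf map_pmf_def[symmetric] pmf.map_comp o_def)
  also have "\<dots> = bind_pmf (pmf_of_set U) (\<lambda>v. bind_pmf (bernoulli_field (dom g) p)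
        (\<lambda>S. map_pmf fst (explore_run K p m (g(v \<mapsto> greedy_freq K g S), U - {v}))))"
  proof (intro bind_pmf_cong refl)
    fix v assume "v \<in> set_pmf (pmf_of_set U)"
    then have v: "v \<in> U"
      using U by simp
    show "bind_pmf (bernoulli_field (unrevealed_pairs (dom g) U) p) (\<lambda>X.
            map_pmf (\<lambda>vs. sfap_assign K (edge_rel X) g (v # vs)) (pmf_of_set (permutations_of_set (U - {v})))) =
          bind_pmf (bernoulli_field (dom g) p)
            (\<lambda>S. map_pmf fst (explore_run K p m (g(v \<mapsto> greedy_freq K g S), U - {v})))"
    proof (rule sfap_assign_first_step[OF U(1) Suc.prems(2,3) v, folded m])
      fix g' :: "nat \<Rightarrow> nat option" assume "dom g' = insert v (dom g)"
      moreover have "card (U - {v}) = m"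
        using Suc.hyps(2) v U by simp
      ultimately show "bind_pmf (bernoulli_field (unrevealed_pairs (dom g') (U - {v})) p)
          (\<lambda>X. map_pmf (sfap_assign K (edge_rel X) g') (pmf_of_set (permutations_of_set (U - {v}))))
          = map_pmf fst (explore_run K p m (g', U - {v}))"
        using Suc.hyps(1)[of "U - {v}" g'] Suc.prems by auto
    qed
  qed
  also have "\<dots> = map_pmf fst (explore_run K p (card U) (g, U))"
    unfolding Suc.hyps(2)[symmetric] explore_run.simps explore_step_eq
    by (simp add: map_bind_pmf bind_map_pmf bind_assoc_pmf)
  finally show ?case .
qed

lemma sfap_model_eq_explore_traj:
  "sfap_model K n p = map_pmf (fst \<circ> last) (explore_traj K p n n)"
proof -
  have "{(i, j). i \<in> {1..n} \<and> j \<in> {1..n} \<and> i < j} = unrevealed_pairs {} {1..n}"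
    unfolding unrevealed_pairs_def by auto
  moreover have "(\<lambda>X v u. v \<noteq> u \<and> X (min u v, max u v)) = edge_rel"
    by (intro ext) (simp add: edge_rel_def)
  ultimately have "erdos_renyi n p = map_pmf edge_rel (bernoulli_field (unrevealed_pairs {} {1..n}) p)"
    unfolding erdos_renyi_def by simp
  then have "sfap_model K n p = map_pmf fst (explore_run K p (card {1..n}) (Map.empty, {1..n}))"
    unfolding sfap_model_def using sfap_assign_eq_explore_run[of "{1..n}" Map.empty p K]
    by (simp add: bind_map_pmf)
  then show ?thesis
    using map_pmf_last_explore_traj[of K p n n, symmetric] by (simp add: pmf.map_comp)
qed

lemma N_count_sfap_model:
  "map_pmf (\<lambda>g. real (N_count g k) / real n) (sfap_model K n p) =
   map_pmf (\<lambda>tr. alpha_n n tr k 1) (explore_traj K p n n)"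
  unfolding sfap_model_eq_explore_traj pmf.map_comp
proof (intro map_pmf_cong refl)
  fix tr assume "tr \<in> set_pmf (explore_traj K p n n)"
  then have "length tr = Suc n"
    using explore_traj_valid(2)[OF order_refl] by (simp add: valid_traj_def)
  then have "last tr = tr ! n"
    by (cases tr rule: rev_cases) auto
  then show "((\<lambda>g. real (N_count g k) / real n) \<circ> (fst \<circ> last)) tr = alpha_n n tr k 1"
    by (simp add: alpha_n_eq N_count_def freq_count_def)
qed

lemma cdf_return: "cdf (return borel a) x = (if a \<le> x then 1 else 0)"
  unfolding cdf_def by (subst measure_return) (auto simp: indicator_def)

lemma not_isCont_cdf_return: "\<not> isCont (cdf (return borel a)) a"
proof
  assume cont: "isCont (cdf (return borel a)) a"
  have "(\<lambda>m::nat. a - 1 / real (Suc m)) \<longlonglongrightarrow> a"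
    by real_asymp
  then have "(\<lambda>m. cdf (return borel a) (a - 1 / real (Suc m))) \<longlonglongrightarrow> cdf (return borel a) a"
    using isCont_tendsto_compose[OF cont] by blast
  then have "(\<lambda>m::nat. 0::real) \<longlonglongrightarrow> 1"
    by (simp add: cdf_return)
  then show False
    using LIMSEQ_unique[OF tendsto_const] by fastforce
qed

lemma weak_conv_m_return_of_tendsto_prob:
  fixes M :: "nat \<Rightarrow> real pmf" and a :: real
  assumes lim: "\<And>e. e > 0 \<Longrightarrow> (\<lambda>n. measure_pmf.prob (M n) {x. \<bar>x - a\<bar> > e}) \<longlonglongrightarrow> 0"
  shows "weak_conv_m (\<lambda>n. measure_pmf (M n)) (return borel a)"
  unfolding weak_conv_m_def weak_conv_def
proof (intro allI impI)
  fix x assume "isCont (cdf (return borel a)) x"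
  then have "x \<noteq> a"
    using not_isCont_cdf_return by blast
  show "(\<lambda>n. cdf (measure_pmf (M n)) x) \<longlonglongrightarrow> cdf (return borel a) x"
  proof (cases "x < a")
    case True
    then have e: "(a - x) / 2 > 0" and zero: "cdf (return borel a) x = 0"
      by (simp_all add: cdf_return)
    show ?thesis
      unfolding zero
    proof (rule tendsto_sandwich[OF _ _ tendsto_const lim[OF e]])
      show "eventually (\<lambda>n. cdf (measure_pmf (M n)) x \<le> measure_pmf.prob (M n) {y. \<bar>y - a\<bar> > (a - x) / 2}) sequentially"
        unfolding cdf_def using True by (intro always_eventually allI measure_pmf.finite_measure_mono) auto
    qed (simp add: cdf_def)
  next
    case False
    with \<open>x \<noteq> a\<close> have "a < x"
      by simp
    then have one: "cdf (return borel a) x = 1"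
      by (simp add: cdf_return)
    have "(\<lambda>n. 1 - measure_pmf.prob (M n) {y. \<bar>y - a\<bar> > (x - a) / 2}) \<longlonglongrightarrow> 1 - 0"
      using \<open>a < x\<close> by (intro tendsto_diff tendsto_const lim) simp
    then have lim1: "(\<lambda>n. 1 - measure_pmf.prob (M n) {y. \<bar>y - a\<bar> > (x - a) / 2}) \<longlonglongrightarrow> 1"
      by simp
    have lower: "1 - measure_pmf.prob (M n) {y. \<bar>y - a\<bar> > (x - a) / 2} \<le> cdf (measure_pmf (M n)) x" for n
    proof -
      have "measure_pmf.prob (M n) (UNIV - {..x}) \<le> measure_pmf.prob (M n) {y. \<bar>y - a\<bar> > (x - a) / 2}"
        using \<open>a < x\<close> by (intro measure_pmf.finite_measure_mono) auto
      moreover have "measure_pmf.prob (M n) (UNIV - {..x}) = 1 - measure_pmf.prob (M n) {..x}"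
        by (subst measure_pmf.prob_compl[symmetric]) auto
      ultimately show ?thesis
        unfolding cdf_def by simp
    qed
    show ?thesis
      unfolding one
    proof (rule tendsto_sandwich[OF _ _ lim1 tendsto_const])
      show "eventually (\<lambda>n. 1 - measure_pmf.prob (M n) {y. \<bar>y - a\<bar> > (x - a) / 2} \<le> cdf (measure_pmf (M n)) x)
          sequentially"
        using lower by (intro always_eventually allI)
    qed (simp add: cdf_def)
  qed
qed

theorem theorem3:
  fixes c :: real and K :: nat
  assumes "c > 0" and "K \<ge> 1"
  shows "\<exists>\<alpha>. solves_sfap_ie c K \<alpha>
     \<and> (\<forall>\<beta>. solves_sfap_ie c K \<beta> \<longrightarrow> (\<forall>t\<in>{0..1}. \<forall>k\<in>{1..K}. \<beta> t k = \<alpha> t k))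
     \<and> (\<forall>\<epsilon>>0. (\<lambda>n. measure_pmf.prob (explore_traj K (c / real n) n n)
            {tr. \<exists>t\<in>{0..1}. \<exists>k\<in>{1..K}. \<bar>alpha_n n tr k t - \<alpha> t k\<bar> > \<epsilon>}) \<longlonglongrightarrow> 0)
     \<and> (\<forall>k\<in>{1..K}. weak_conv_m
           (\<lambda>n. measure_pmf (map_pmf (\<lambda>g. real (N_count g k) / real n) (sfap_model K n (c / real n))))
           (return borel (\<alpha> 1 k)))"
proof (intro exI[of _ "sfap_alpha c"] conjI allI impI ballI)
  show "solves_sfap_ie c K (sfap_alpha c)"
    using assms(1) by (rule solves_sfap_ie_sfap_alpha)
  show "\<beta> t k = sfap_alpha c t k" if "solves_sfap_ie c K \<beta>" "t \<in> {0..1}" "k \<in> {1..K}" for \<beta> t k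
    using solves_sfap_ie_unique[OF assms(1) that] .
  show "(\<lambda>n. measure_pmf.prob (explore_traj K (c / real n) n n)
      {tr. \<exists>t\<in>{0..1}. \<exists>k\<in>{1..K}. \<bar>alpha_n n tr k t - sfap_alpha c t k\<bar> > \<epsilon>}) \<longlonglongrightarrow> 0" if "\<epsilon> > 0" for \<epsilon>
    using alpha_n_tendsto_uniform[OF assms(1) that] .
  fix k assume k: "k \<in> {1..K}"
  show "weak_conv_m (\<lambda>n. measure_pmf (map_pmf (\<lambda>g. real (N_count g k) / real n) (sfap_model K n (c / real n))))
          (return borel (sfap_alpha c 1 k))"
    unfolding N_count_sfap_model
    using alpha_n_tendsto_pointwise[OF assms(1) _ k]
    by (intro weak_conv_m_return_of_tendsto_prob) (simp add: measure_map_pmf vimage_def)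
qed

end
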